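(* Let $M$ be a finite group with normal subgroups $K_0\leq K$, and let $E$ be a group acting on $M$ stabilizing $K$ and $K_0$. Let $\mathbb K\subseteq\mathrm{Irr}(K)$ be $ME$-stable. Assume: (i) $K=\operatorname{Z}(K)K_0$; (ii) there exists an $E$-stable subgroup $V\leq M$ such that (ii.1) $M=KV$ and $H:=V\cap K\leq\operatorname{Z}(K)$, and (ii.2) there exists a $VE$-equivariant extension map $\Lambda_0$ with respect to $H\lhd V$ for $\bigcup_{\lambda\in\mathbb K}\mathrm{Irr}(H\mid\lambda)$; (iii) with $\epsilon\colon V\to V/H$ the canonical surjection, there exists an $\epsilon(V)E$-equivariant extension map $\Lambda_\epsilon$ with respect to $K_0\lhd K_0\rtimes\epsilon(V)$ for $\bigcup_{\lambda\in\mathbb K}\mathrm{Irr}(K_0\mid\lambda)$. Then there exists an $ME$-equivariant extension map with respect to $K\lhd M$ for $\mathbb K$.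
   Context: An extension map with respect to $H\lhd G'$ for $\mathbb I\subseteq\mathrm{Irr}(H)$ is a map assigning to each $\varphi\in\mathbb I$ an extension of $\varphi$ to its stabilizer $G'_\varphi$; it is $X$-equivariant if it commutes with the action of $X$ by conjugation/automorphisms. $\mathrm{Irr}(H\mid\lambda)$ denotes the irreducible constituents of the restriction of $\lambda$ to $H$. In (iii), $V/H$ acts on $K_0$ since $H\le\operatorname{Z}(K)$ acts trivially, and $K_0\rtimes\epsilon(V)$ is the corresponding semidirect product. *)

theory Defs
  imports "HOL-Algebra.Algebra" "Jordan_Normal_Form.Matrix"
begin

definition is_rep :: "('g, 'b) monoid_scheme \<Rightarrow> nat \<Rightarrow> ('g \<Rightarrow> complex mat) \<Rightarrow> bool" where
  "is_rep G n \<rho> \<longleftrightarrow> 0 < n \<and> (\<forall>g\<in>carrier G. \<rho> g \<in> carrier_mat n n) \<and>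
     \<rho> \<one>\<^bsub>G\<^esub> = 1\<^sub>m n \<and>
     (\<forall>g\<in>carrier G. \<forall>h\<in>carrier G. \<rho> (g \<otimes>\<^bsub>G\<^esub> h) = \<rho> g * \<rho> h)"

definition is_subspace :: "nat \<Rightarrow> complex vec set \<Rightarrow> bool" where
  "is_subspace n W \<longleftrightarrow> W \<subseteq> carrier_vec n \<and> 0\<^sub>v n \<in> W \<and>
     (\<forall>v\<in>W. \<forall>w\<in>W. v + w \<in> W) \<and> (\<forall>c. \<forall>v\<in>W. c \<cdot>\<^sub>v v \<in> W)"

definition irreducible_rep :: "('g, 'b) monoid_scheme \<Rightarrow> nat \<Rightarrow> ('g \<Rightarrow> complex mat) \<Rightarrow> bool" where
  "irreducible_rep G n \<rho> \<longleftrightarrow> is_rep G n \<rho> \<and>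
     (\<forall>W. is_subspace n W \<and> (\<forall>g\<in>carrier G. \<forall>w\<in>W. \<rho> g *\<^sub>v w \<in> W)
        \<longrightarrow> W = {0\<^sub>v n} \<or> W = carrier_vec n)"

definition mat_trace :: "complex mat \<Rightarrow> complex" where
  "mat_trace A = (\<Sum>i<dim_row A. A $$ (i, i))"

text \<open>Characters are functions on the element type, vanishing outside the carrier.\<close>
definition Irr :: "('g, 'b) monoid_scheme \<Rightarrow> ('g \<Rightarrow> complex) set" where
  "Irr G = {\<chi>. \<exists>n \<rho>. irreducible_rep G n \<rho> \<and>
              \<chi> = (\<lambda>g. if g \<in> carrier G then mat_trace (\<rho> g) else 0)}"

definition restr :: "('g \<Rightarrow> complex) \<Rightarrow> 'g set \<Rightarrow> ('g \<Rightarrow> complex)" where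
  "restr \<chi> N = (\<lambda>x. if x \<in> N then \<chi> x else 0)"

text \<open>Irr(N | chi): irreducible constituents of the restriction of chi to N
  (those phi in Irr(N) with nonzero inner product with Res chi).\<close>
definition Irr_under :: "('g, 'b) monoid_scheme \<Rightarrow> 'g set \<Rightarrow> ('g \<Rightarrow> complex) \<Rightarrow> ('g \<Rightarrow> complex) set" where
  "Irr_under G N \<chi> = {\<phi> \<in> Irr (G\<lparr>carrier := N\<rparr>).
      (\<Sum>h\<in>N. restr \<chi> N h * cnj (\<phi> h)) / of_nat (card N) \<noteq> 0}"

definition conjc :: "('g, 'b) monoid_scheme \<Rightarrow> 'g \<Rightarrow> ('g \<Rightarrow> complex) \<Rightarrow> ('g \<Rightarrow> complex)" where
  "conjc G g \<chi> = (\<lambda>x. if x \<in> carrier G then \<chi> (inv\<^bsub>G\<^esub> g \<otimes>\<^bsub>G\<^esub> x \<otimes>\<^bsub>G\<^esub> g) else 0)"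

definition autc :: "('g, 'b) monoid_scheme \<Rightarrow> ('e, 'c) monoid_scheme \<Rightarrow> ('e \<Rightarrow> 'g \<Rightarrow> 'g)
     \<Rightarrow> 'e \<Rightarrow> ('g \<Rightarrow> complex) \<Rightarrow> ('g \<Rightarrow> complex)" where
  "autc G E \<beta> e \<chi> = (\<lambda>x. if x \<in> carrier G then \<chi> (\<beta> (inv\<^bsub>E\<^esub> e) x) else 0)"

definition acts_by_auts :: "('e, 'c) monoid_scheme \<Rightarrow> ('g, 'b) monoid_scheme \<Rightarrow> ('e \<Rightarrow> 'g \<Rightarrow> 'g) \<Rightarrow> bool" where
  "acts_by_auts E G \<alpha> \<longleftrightarrow> group E \<and>
     (\<forall>e\<in>carrier E. \<alpha> e \<in> iso G G) \<and>
     (\<forall>e\<in>carrier E. \<forall>f\<in>carrier E. \<forall>x\<in>carrier G. \<alpha> (e \<otimes>\<^bsub>E\<^esub> f) x = \<alpha> e (\<alpha> f x))"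

definition stab :: "('g, 'b) monoid_scheme \<Rightarrow> ('g \<Rightarrow> complex) \<Rightarrow> 'g set" where
  "stab G \<phi> = {g \<in> carrier G. conjc G g \<phi> = \<phi>}"

definition ext_map :: "('g, 'b) monoid_scheme \<Rightarrow> 'g set \<Rightarrow> ('g \<Rightarrow> complex) set
     \<Rightarrow> (('g \<Rightarrow> complex) \<Rightarrow> ('g \<Rightarrow> complex)) \<Rightarrow> bool" where
  "ext_map G N I \<Lambda> \<longleftrightarrow> (\<forall>\<phi>\<in>I. \<Lambda> \<phi> \<in> Irr (G\<lparr>carrier := stab G \<phi>\<rparr>) \<and> restr (\<Lambda> \<phi>) N = \<phi>)"

definition conj_equivariant :: "('g, 'b) monoid_scheme \<Rightarrow> 'g set \<Rightarrow> ('g \<Rightarrow> complex) set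
     \<Rightarrow> (('g \<Rightarrow> complex) \<Rightarrow> ('g \<Rightarrow> complex)) \<Rightarrow> bool" where
  "conj_equivariant G S I \<Lambda> \<longleftrightarrow> (\<forall>s\<in>S. \<forall>\<phi>\<in>I. \<Lambda> (conjc G s \<phi>) = conjc G s (\<Lambda> \<phi>))"

definition aut_equivariant :: "('g, 'b) monoid_scheme \<Rightarrow> ('e, 'c) monoid_scheme \<Rightarrow> ('e \<Rightarrow> 'g \<Rightarrow> 'g)
     \<Rightarrow> ('g \<Rightarrow> complex) set \<Rightarrow> (('g \<Rightarrow> complex) \<Rightarrow> ('g \<Rightarrow> complex)) \<Rightarrow> bool" where
  "aut_equivariant G E \<beta> I \<Lambda> \<longleftrightarrow>
     (\<forall>e\<in>carrier E. \<forall>\<phi>\<in>I. \<Lambda> (autc G E \<beta> e \<phi>) = autc G E \<beta> e (\<Lambda> \<phi>))"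

definition center :: "('g, 'b) monoid_scheme \<Rightarrow> 'g set \<Rightarrow> 'g set" where
  "center G K = {z \<in> K. \<forall>k\<in>K. z \<otimes>\<^bsub>G\<^esub> k = k \<otimes>\<^bsub>G\<^esub> z}"

text \<open>K0 x| eps(V), where eps(V) = V/H acts on K0 by conjugation with any representative
  (well defined since H acts trivially on K0).  Elements are pairs (k, coset H v).\<close>
definition sdp :: "('g, 'b) monoid_scheme \<Rightarrow> 'g set \<Rightarrow> 'g set \<Rightarrow> 'g set \<Rightarrow> ('g \<times> 'g set) monoid" where
  "sdp M K0 V H = \<lparr>carrier = K0 \<times> rcosets\<^bsub>M\<lparr>carrier := V\<rparr>\<^esub> H,
     monoid.mult = (\<lambda>(k, C) (k', C'). (let c = (SOME c. c \<in> C) in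
               (k \<otimes>\<^bsub>M\<^esub> (c \<otimes>\<^bsub>M\<^esub> k' \<otimes>\<^bsub>M\<^esub> inv\<^bsub>M\<^esub> c), C <#>\<^bsub>M\<^esub> C'))),
     monoid.one = (\<one>\<^bsub>M\<^esub>, H)\<rparr>"

definition sdp_act :: "('e \<Rightarrow> 'g \<Rightarrow> 'g) \<Rightarrow> 'e \<Rightarrow> ('g \<times> 'g set) \<Rightarrow> ('g \<times> 'g set)" where
  "sdp_act \<alpha> e = (\<lambda>(k, C). (\<alpha> e k, \<alpha> e ` C))"

text \<open>Transport of a character of K0 to the subgroup K0 x {1} of K0 x| (V/H).\<close>
definition emb0 :: "'g set \<Rightarrow> ('g \<Rightarrow> complex) \<Rightarrow> ('g \<times> 'g set \<Rightarrow> complex)" where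
  "emb0 H \<phi> = (\<lambda>(k, C). if C = H then \<phi> k else 0)"

end

theory Submission
  imports Defs "Jordan_Normal_Form.Char_Poly"
begin

text \<open>Let \<chi> \<in> KK be afforded by \<rho>.  By Schur's lemma the centre Z of K acts through a linear
  character \<lambda>, and since K = Z K0, \<rho> stays irreducible on K0; so \<chi> lies over the linear character
  \<nu> = \<lambda>|H of H = V \<inter> K \<subseteq> Z and over \<theta> = \<chi>|K0 \<in> Irr(K0).  Every x \<in> M factors as
  x = z k0 v (z \<in> Z, k0 \<in> K0, v \<in> V), and x stabilises \<chi> iff v does.  On the stabiliser put
  \<Lambda>(\<chi>)(z k0 v) = \<lambda>(z) \<Lambda>0(\<nu>)(v) \<Lambda>\<epsilon>(\<theta>)(k0, Hv).  The factorisation is unique up to moving some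
  h \<in> H from v into Z, and this ambiguity cancels: \<Lambda>0(\<nu>) extends \<lambda> on H, while a representation
  affording \<Lambda>\<epsilon>(\<theta>) is scalar (namely \<lambda>) on Z \<inter> K0, since it restricts to a representation of
  K0 with the irreducible character \<theta>.  The same formula with matrices defines a representation
  which restricts to K0 irreducibly, so \<Lambda>(\<chi>) is an irreducible extension of \<chi>.  Conjugation by
  v \<in> V and the action of E are automorphisms of M preserving K, K0 and V, and the whole construction
  is transported along them, using the equivariance of \<Lambda>0 and \<Lambda>\<epsilon>; elements of K fix both \<chi> and
  \<Lambda>(\<chi>), and M = K V.\<close>

section \<open>Matrices and traces\<close>

lemma mat_has_eigenvector:
  fixes A :: "complex mat"
  assumes A: "A \<in> carrier_mat n n" and n: "0 < n"
  shows "\<exists>a v. v \<in> carrier_vec n \<and> v \<noteq> 0\<^sub>v n \<and> A *\<^sub>v v = a \<cdot>\<^sub>v v"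
proof -
  obtain as where cp: "char_poly A = (\<Prod>a \<leftarrow> as. [:- a, 1:])" and l: "length as = n"
    using char_poly_factorized[OF A] by blast
  then obtain a as' where as: "as = a # as'" using n by (cases as) auto
  have "poly (char_poly A) a = 0" unfolding cp as by simp
  hence "eigenvalue A a" using eigenvalue_root_char_poly[OF A] by simp
  then obtain v where "eigenvector A v a" unfolding eigenvalue_def by blast
  thus ?thesis unfolding eigenvector_def using A by auto
qed

lemma mult_if_zero:
  "x * (if P then y else 0) = (if P then x * y else (0::'a::semiring_0))"
  "(if P then y else 0) * x = (if P then y * x else (0::'a::semiring_0))"
  by auto

lemma scalar_prod_row_col:
  assumes "A \<in> carrier_mat n m" "B \<in> carrier_mat m p" "i < n" "j < p"
  shows "row A i \<bullet> col B j = (\<Sum>k<m. A $$ (i,k) * B $$ (k,j))"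
  using assms by (simp add: scalar_prod_def lessThan_atLeast0 mult.commute)

lemma index_mult_mat_sum:
  assumes "A \<in> carrier_mat n m" "B \<in> carrier_mat m p" "i < n" "j < p"
  shows "(A * B) $$ (i,j) = (\<Sum>k<m. A $$ (i,k) * B $$ (k,j))"
  using assms by (simp add: scalar_prod_row_col)

lemma smult_one_mat_mult_vec:
  assumes "(x :: complex vec) \<in> carrier_vec n"
  shows "(a \<cdot>\<^sub>m 1\<^sub>m n) *\<^sub>v x = a \<cdot>\<^sub>v x"
  using assms by (intro eq_vecI) (auto simp: scalar_prod_def mult_if_zero sum.delta cong: if_cong)

lemma smult_mat_mult_vec:
  "A \<in> carrier_mat n m \<Longrightarrow> w \<in> carrier_vec m \<Longrightarrow> (a \<cdot>\<^sub>m A) *\<^sub>v w = a \<cdot>\<^sub>v (A *\<^sub>v (w :: complex vec))"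
  by (intro eq_vecI) (auto simp: scalar_prod_def sum_distrib_left mult.assoc)

lemma smult_smult_mat: "a \<cdot>\<^sub>m (b \<cdot>\<^sub>m C) = (a * b) \<cdot>\<^sub>m (C :: complex mat)"
  by (intro eq_matI) (auto simp: mult.assoc)

lemma one_smult_mat: "(1::complex) \<cdot>\<^sub>m A = A"
  by (intro eq_matI) auto

lemma smult_one_mat_mult: "B \<in> carrier_mat n m \<Longrightarrow> (a \<cdot>\<^sub>m 1\<^sub>m n) * B = a \<cdot>\<^sub>m (B :: complex mat)"
  by (simp add: mult_smult_assoc_mat[of "1\<^sub>m n" n n B m])

lemma smult_mult_smult_mat:
  "A \<in> carrier_mat n n \<Longrightarrow> B \<in> carrier_mat n n \<Longrightarrow>
   (a \<cdot>\<^sub>m A) * (b \<cdot>\<^sub>m B) = (a * b) \<cdot>\<^sub>m (A * (B :: complex mat))"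
  by (simp add: mult_smult_assoc_mat[of A n n _ n] mult_smult_distrib[of A n n B n] smult_smult_mat)

lemma mat_eq_if_mult_vec_eq:
  fixes A B :: "complex mat"
  assumes A: "A \<in> carrier_mat n n" and B: "B \<in> carrier_mat n n"
    and eq: "\<And>x. x \<in> carrier_vec n \<Longrightarrow> A *\<^sub>v x = B *\<^sub>v x"
  shows "A = B"
proof (rule eq_matI)
  fix i j assume i: "i < dim_row B" and j: "j < dim_col B"
  have "(A *\<^sub>v unit_vec n j) $ i = (B *\<^sub>v unit_vec n j) $ i" using eq[of "unit_vec n j"] by simp
  thus "A $$ (i,j) = B $$ (i,j)" using A B i j
    by (simp add: scalar_prod_def unit_vec_def lessThan_atLeast0 mult_if_zero sum.delta' cong: if_cong)
qed (use A B in auto)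

lemma mult_mat_vec_zero: "A \<in> carrier_mat nr n \<Longrightarrow> A *\<^sub>v 0\<^sub>v n = (0\<^sub>v nr :: complex vec)"
  by (intro eq_vecI) (auto simp: scalar_prod_def)

lemma zero_mult_mat_vec: "x \<in> carrier_vec n \<Longrightarrow> 0\<^sub>m nr n *\<^sub>v x = (0\<^sub>v nr :: complex vec)"
  by (intro eq_vecI) (auto simp: scalar_prod_def)

lemma smult_zero_vec: "c \<cdot>\<^sub>v 0\<^sub>v n = (0\<^sub>v n :: complex vec)"
  by (intro eq_vecI) auto

lemma mat_trace_mult_comm:
  assumes A: "A \<in> carrier_mat n m" and B: "B \<in> carrier_mat m n"
  shows "mat_trace (A * B) = mat_trace (B * A)"
proof -
  have "mat_trace (A * B) = (\<Sum>i<n. \<Sum>k<m. A $$ (i,k) * B $$ (k,i))"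
    using A B by (auto simp: mat_trace_def scalar_prod_row_col[OF A B] intro!: sum.cong)
  also have "\<dots> = (\<Sum>k<m. \<Sum>i<n. B $$ (k,i) * A $$ (i,k))"
    by (subst sum.swap) (simp add: mult.commute)
  also have "\<dots> = mat_trace (B * A)"
    using A B by (auto simp: mat_trace_def scalar_prod_row_col[OF B A] intro!: sum.cong)
  finally show ?thesis .
qed

lemma mat_trace_smult: "A \<in> carrier_mat n n \<Longrightarrow> mat_trace (c \<cdot>\<^sub>m A) = c * mat_trace A"
  by (auto simp: mat_trace_def sum_distrib_left intro!: sum.cong)

lemma mat_trace_one: "mat_trace (1\<^sub>m n) = of_nat n"
  by (simp add: mat_trace_def)

definition mat_sum :: "nat \<Rightarrow> 'a set \<Rightarrow> ('a \<Rightarrow> complex mat) \<Rightarrow> complex mat" where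
  "mat_sum n S f = mat n n (\<lambda>ij. \<Sum>s\<in>S. f s $$ ij)"

lemma mat_sum_carrier [simp]: "mat_sum n S f \<in> carrier_mat n n"
  by (simp add: mat_sum_def)

lemma index_mat_sum: "i < n \<Longrightarrow> j < n \<Longrightarrow> mat_sum n S f $$ (i,j) = (\<Sum>s\<in>S. f s $$ (i,j))"
  by (simp add: mat_sum_def)

lemma mat_sum_cong: "(\<And>s. s \<in> S \<Longrightarrow> f s = g s) \<Longrightarrow> mat_sum n S f = mat_sum n S g"
  unfolding mat_sum_def by (intro cong_mat refl sum.cong) auto

lemma mult_mat_sum:
  assumes A: "A \<in> carrier_mat n n" and f: "\<And>s. s \<in> S \<Longrightarrow> f s \<in> carrier_mat n n"
  shows "A * mat_sum n S f = mat_sum n S (\<lambda>s. A * f s)"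
proof (rule eq_matI)
  fix i j assume "i < dim_row (mat_sum n S (\<lambda>s. A * f s))" "j < dim_col (mat_sum n S (\<lambda>s. A * f s))"
  hence ij: "i < n" "j < n" by (auto simp: mat_sum_def)
  have "(A * mat_sum n S f) $$ (i,j) = (\<Sum>k<n. A $$ (i,k) * (\<Sum>s\<in>S. f s $$ (k,j)))"
    using ij by (simp add: index_mult_mat_sum[OF A mat_sum_carrier] index_mat_sum)
  also have "\<dots> = (\<Sum>s\<in>S. \<Sum>k<n. A $$ (i,k) * f s $$ (k,j))"
    by (simp add: sum_distrib_left) (rule sum.swap)
  also have "\<dots> = mat_sum n S (\<lambda>s. A * f s) $$ (i,j)"
    using ij by (simp add: index_mat_sum index_mult_mat_sum[OF A f])
  finally show "(A * mat_sum n S f) $$ (i,j) = mat_sum n S (\<lambda>s. A * f s) $$ (i,j)" .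
qed (use A in \<open>auto simp: mat_sum_def\<close>)

lemma mat_sum_mult:
  assumes A: "A \<in> carrier_mat n n" and f: "\<And>s. s \<in> S \<Longrightarrow> f s \<in> carrier_mat n n"
  shows "mat_sum n S f * A = mat_sum n S (\<lambda>s. f s * A)"
proof (rule eq_matI)
  fix i j assume "i < dim_row (mat_sum n S (\<lambda>s. f s * A))" "j < dim_col (mat_sum n S (\<lambda>s. f s * A))"
  hence ij: "i < n" "j < n" by (auto simp: mat_sum_def)
  have "(mat_sum n S f * A) $$ (i,j) = (\<Sum>k<n. (\<Sum>s\<in>S. f s $$ (i,k)) * A $$ (k,j))"
    using ij by (simp add: index_mult_mat_sum[OF mat_sum_carrier A] index_mat_sum)
  also have "\<dots> = (\<Sum>s\<in>S. \<Sum>k<n. f s $$ (i,k) * A $$ (k,j))"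
    by (simp add: sum_distrib_right) (rule sum.swap)
  also have "\<dots> = mat_sum n S (\<lambda>s. f s * A) $$ (i,j)"
    using ij by (simp add: index_mat_sum index_mult_mat_sum[OF f A])
  finally show "(mat_sum n S f * A) $$ (i,j) = mat_sum n S (\<lambda>s. f s * A) $$ (i,j)" .
qed (use A in \<open>auto simp: mat_sum_def\<close>)

lemma mat_trace_mat_sum:
  assumes f: "\<And>s. s \<in> S \<Longrightarrow> f s \<in> carrier_mat n n"
  shows "mat_trace (mat_sum n S f) = (\<Sum>s\<in>S. mat_trace (f s))"
proof -
  have "mat_trace (mat_sum n S f) = (\<Sum>i<n. \<Sum>s\<in>S. f s $$ (i,i))"
    by (simp add: mat_trace_def index_mat_sum mat_sum_def)
  also have "\<dots> = (\<Sum>s\<in>S. \<Sum>i<n. f s $$ (i,i))" by (rule sum.swap)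
  also have "\<dots> = (\<Sum>s\<in>S. mat_trace (f s))" using f by (auto simp: mat_trace_def intro!: sum.cong)
  finally show ?thesis .
qed

lemma mat_sum_reindex:
  assumes "bij_betw h S S" shows "mat_sum n S (\<lambda>s. f (h s)) = mat_sum n S f"
  unfolding mat_sum_def using sum.reindex_bij_betw[OF assms, of "\<lambda>s. f s $$ _"]
  by (intro cong_mat refl) auto

definition mat_unit :: "nat \<Rightarrow> nat \<Rightarrow> nat \<Rightarrow> complex mat" where
  "mat_unit n i j = mat n n (\<lambda>(k,l). if k = i \<and> l = j then 1 else 0)"

lemma mat_unit_carrier [simp]: "mat_unit n i j \<in> carrier_mat n n"
  by (simp add: mat_unit_def)

lemma index_mult_mat_unit_mult:
  assumes A: "A \<in> carrier_mat n n" and B: "B \<in> carrier_mat n n" and i: "i < n" and j: "j < n"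
  shows "(A * mat_unit n i j * B) $$ (i,j) = A $$ (i,i) * B $$ (j,j)"
proof -
  have row: "(A * mat_unit n i j) $$ (i,l) = (if l = j then A $$ (i,i) else 0)" if l: "l < n" for l
  proof -
    have "(A * mat_unit n i j) $$ (i,l) = (\<Sum>k<n. A $$ (i,k) * mat_unit n i j $$ (k,l))"
      by (rule index_mult_mat_sum[OF A mat_unit_carrier i l])
    also have "\<dots> = (\<Sum>k<n. if k = i then (if l = j then A $$ (i,i) else 0) else 0)"
      using l by (intro sum.cong refl) (auto simp: mat_unit_def)
    finally show ?thesis using i by (simp add: sum.delta)
  qed
  have "(A * mat_unit n i j * B) $$ (i,j) = (\<Sum>l<n. (A * mat_unit n i j) $$ (i,l) * B $$ (l,j))"
    using A by (intro index_mult_mat_sum[OF _ B i j]) simp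
  also have "\<dots> = (\<Sum>l<n. if l = j then A $$ (i,i) * B $$ (l,j) else 0)"
    by (intro sum.cong refl) (simp add: row)
  finally show ?thesis using j by (simp add: sum.delta)
qed

lemma mat_trace_mat_unit:
  assumes "i < n" "j < n" shows "mat_trace (mat_unit n i j) = (if i = j then 1 else 0)"
proof -
  have "mat_trace (mat_unit n i j) = (\<Sum>k<n. if k = i \<and> i = j then 1 else 0)"
    unfolding mat_trace_def mat_unit_def by (intro sum.cong) auto
  thus ?thesis using assms by (simp add: sum.delta)
qed

lemma sum_mult_cnj_nonzero:
  assumes "finite S" and "a \<in> S" and "f a \<noteq> 0"
  shows "(\<Sum>x\<in>S. f x * cnj (f x)) \<noteq> (0::complex)"
proof -
  have "(\<Sum>x\<in>S. f x * cnj (f x)) = of_real (\<Sum>x\<in>S. (cmod (f x))\<^sup>2)"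
    by (simp only: of_real_sum complex_norm_square)
  moreover have "(\<Sum>x\<in>S. (cmod (f x))\<^sup>2) \<ge> (cmod (f a))\<^sup>2"
    using assms by (intro member_le_sum) auto
  moreover have "(cmod (f a))\<^sup>2 > 0" using assms by simp
  ultimately show ?thesis by (metis less_le_trans of_real_eq_0_iff order_less_irrefl)
qed

section \<open>Representations\<close>

lemma rep_carrier: "is_rep G n \<rho> \<Longrightarrow> g \<in> carrier G \<Longrightarrow> \<rho> g \<in> carrier_mat n n"
  by (simp add: is_rep_def)

lemma rep_mult:
  "is_rep G n \<rho> \<Longrightarrow> g \<in> carrier G \<Longrightarrow> h \<in> carrier G \<Longrightarrow> \<rho> (g \<otimes>\<^bsub>G\<^esub> h) = \<rho> g * \<rho> h"
  by (simp add: is_rep_def)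

lemma rep_one: "is_rep G n \<rho> \<Longrightarrow> \<rho> \<one>\<^bsub>G\<^esub> = 1\<^sub>m n"
  by (simp add: is_rep_def)

lemma rep_pos: "is_rep G n \<rho> \<Longrightarrow> 0 < n"
  by (simp add: is_rep_def)

lemma rep_inv:
  assumes "group G" "is_rep G n \<rho>" "g \<in> carrier G"
  shows "\<rho> (inv\<^bsub>G\<^esub> g) * \<rho> g = 1\<^sub>m n" "\<rho> g * \<rho> (inv\<^bsub>G\<^esub> g) = 1\<^sub>m n"
  using rep_mult[OF assms(2), of "inv\<^bsub>G\<^esub> g" g] rep_mult[OF assms(2), of g "inv\<^bsub>G\<^esub> g"]
    rep_one[OF assms(2)] assms group.l_inv group.r_inv group.inv_closed by fastforce+

lemma rep_trace_conj:
  assumes G: "group G" and r: "is_rep G n \<rho>" and g: "g \<in> carrier G" and x: "x \<in> carrier G"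
  shows "mat_trace (\<rho> (g \<otimes>\<^bsub>G\<^esub> x \<otimes>\<^bsub>G\<^esub> inv\<^bsub>G\<^esub> g)) = mat_trace (\<rho> x)"
proof -
  have ig: "inv\<^bsub>G\<^esub> g \<in> carrier G" using G g by (simp add: group.inv_closed)
  have c: "\<rho> g \<in> carrier_mat n n" "\<rho> x \<in> carrier_mat n n" "\<rho> (inv\<^bsub>G\<^esub> g) \<in> carrier_mat n n"
    using rep_carrier[OF r] g x ig by auto
  have "\<rho> (g \<otimes>\<^bsub>G\<^esub> x \<otimes>\<^bsub>G\<^esub> inv\<^bsub>G\<^esub> g) = \<rho> g * (\<rho> x * \<rho> (inv\<^bsub>G\<^esub> g))"
    using rep_mult[OF r] g x c ig G
    by (simp add: assoc_mult_mat[of _ n n _ n _ n] monoid.m_closed group.is_monoid)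
  hence "mat_trace (\<rho> (g \<otimes>\<^bsub>G\<^esub> x \<otimes>\<^bsub>G\<^esub> inv\<^bsub>G\<^esub> g)) = mat_trace ((\<rho> x * \<rho> (inv\<^bsub>G\<^esub> g)) * \<rho> g)"
    using mat_trace_mult_comm[of "\<rho> g" n n "\<rho> x * \<rho> (inv\<^bsub>G\<^esub> g)"] c by simp
  also have "\<dots> = mat_trace (\<rho> x * (\<rho> (inv\<^bsub>G\<^esub> g) * \<rho> g))"
    using c by (simp add: assoc_mult_mat[of _ n n _ n _ n])
  also have "\<dots> = mat_trace (\<rho> x)" using rep_inv[OF G r g] c by simp
  finally show ?thesis .
qed

definition invariant_subspace :: "('g, 'b) monoid_scheme \<Rightarrow> nat \<Rightarrow> ('g \<Rightarrow> complex mat) \<Rightarrow> complex vec set \<Rightarrow> bool" where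
  "invariant_subspace G n \<rho> W \<longleftrightarrow> is_subspace n W \<and> (\<forall>g\<in>carrier G. \<forall>w\<in>W. \<rho> g *\<^sub>v w \<in> W)"

lemma irreducible_rep_iff:
  "irreducible_rep G n \<rho> \<longleftrightarrow>
     is_rep G n \<rho> \<and> (\<forall>W. invariant_subspace G n \<rho> W \<longrightarrow> W = {0\<^sub>v n} \<or> W = carrier_vec n)"
  by (simp add: irreducible_rep_def invariant_subspace_def)

lemma irreducible_repD:
  "irreducible_rep G n \<rho> \<Longrightarrow> invariant_subspace G n \<rho> W \<Longrightarrow> W = {0\<^sub>v n} \<or> W = carrier_vec n"
  by (simp add: irreducible_rep_iff)

lemma schur_scalar:
  assumes irr: "irreducible_rep G n \<rho>" and A: "A \<in> carrier_mat n n"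
    and comm: "\<And>g. g \<in> carrier G \<Longrightarrow> A * \<rho> g = \<rho> g * A"
  shows "\<exists>a. A = a \<cdot>\<^sub>m 1\<^sub>m n"
proof -
  have r: "is_rep G n \<rho>" using irr by (simp add: irreducible_rep_def)
  obtain a v where v: "v \<in> carrier_vec n" "v \<noteq> 0\<^sub>v n" "A *\<^sub>v v = a \<cdot>\<^sub>v v"
    using mat_has_eigenvector[OF A rep_pos[OF r]] by blast
  define W where "W = {x \<in> carrier_vec n. A *\<^sub>v x = a \<cdot>\<^sub>v x}"
  have "is_subspace n W"
    unfolding is_subspace_def W_def using A
    by (auto simp: mult_mat_vec_zero smult_zero_vec mult_add_distrib_mat_vec smult_add_distrib_vec
        mult_mat_vec smult_smult_assoc mult.commute)
  moreover have "\<rho> g *\<^sub>v w \<in> W" if g: "g \<in> carrier G" and w: "w \<in> W" for g w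
  proof -
    have rg: "\<rho> g \<in> carrier_mat n n" using rep_carrier[OF r g] .
    have wc: "w \<in> carrier_vec n" "A *\<^sub>v w = a \<cdot>\<^sub>v w" using w by (auto simp: W_def)
    have "A *\<^sub>v (\<rho> g *\<^sub>v w) = (\<rho> g * A) *\<^sub>v w" using A rg wc comm[OF g] by (metis assoc_mult_mat_vec)
    also have "\<dots> = a \<cdot>\<^sub>v (\<rho> g *\<^sub>v w)" using A rg wc by (simp add: mult_mat_vec)
    finally show ?thesis using rg wc by (simp add: W_def)
  qed
  ultimately have "invariant_subspace G n \<rho> W" by (simp add: invariant_subspace_def)
  moreover have "W \<noteq> {0\<^sub>v n}" using v by (auto simp: W_def)
  ultimately have "W = carrier_vec n" using irreducible_repD[OF irr] by blast
  hence "A = a \<cdot>\<^sub>m 1\<^sub>m n"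
    by (intro mat_eq_if_mult_vec_eq[OF A]) (auto simp: W_def smult_one_mat_mult_vec)
  thus ?thesis by blast
qed

lemma rep_dim1_irreducible:
  assumes r: "is_rep G 1 \<rho>" shows "irreducible_rep G 1 \<rho>"
  unfolding irreducible_rep_iff
proof (intro conjI r allI impI)
  fix W assume W: "invariant_subspace G 1 \<rho> W"
  hence sub: "is_subspace 1 W" by (simp add: invariant_subspace_def)
  show "W = {0\<^sub>v 1} \<or> W = carrier_vec 1"
  proof (cases "W = {0\<^sub>v 1}")
    case False
    then obtain w where w: "w \<in> W" "w \<noteq> 0\<^sub>v 1" using sub unfolding is_subspace_def by blast
    have wc: "w \<in> carrier_vec 1" using sub w unfolding is_subspace_def by auto
    have w0: "w $ 0 \<noteq> 0"
    proof
      assume "w $ 0 = 0"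
      hence "w = 0\<^sub>v 1" using wc by (intro eq_vecI) (auto simp: less_Suc_eq)
      thus False using w by simp
    qed
    have "x \<in> W" if x: "x \<in> carrier_vec 1" for x
    proof -
      have "x = (x $ 0 / w $ 0) \<cdot>\<^sub>v w" using x wc w0 by (intro eq_vecI) (auto simp: less_Suc_eq)
      thus ?thesis using sub w unfolding is_subspace_def by metis
    qed
    thus ?thesis using sub unfolding is_subspace_def by auto
  qed simp
qed

lemma group_mult_left_bij:
  assumes "group G" and h: "h \<in> carrier G"
  shows "bij_betw (\<lambda>g. h \<otimes>\<^bsub>G\<^esub> g) (carrier G) (carrier G)"
proof -
  interpret group G by fact
  show ?thesis
    by (rule bij_betwI[where g = "\<lambda>g. inv\<^bsub>G\<^esub> h \<otimes>\<^bsub>G\<^esub> g"])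
       (use h in \<open>auto simp: m_assoc[symmetric]\<close>)
qed

text \<open>Averaging \<open>\<sigma> g * Y * \<tau> (inv g)\<close> over the group turns any matrix Y into an
  intertwiner from \<tau> to \<sigma>; with Y running over the matrix units this is the matrix form of
  the orthogonality relations.\<close>

definition intertwiner_avg :: "('g, 'b) monoid_scheme \<Rightarrow> nat \<Rightarrow> ('g \<Rightarrow> complex mat) \<Rightarrow> ('g \<Rightarrow> complex mat)
     \<Rightarrow> complex mat \<Rightarrow> complex mat" where
  "intertwiner_avg G n \<sigma> \<tau> Y = mat_sum n (carrier G) (\<lambda>g. \<sigma> g * Y * \<tau> (inv\<^bsub>G\<^esub> g))"

lemma intertwiner_avg_carrier [simp]: "intertwiner_avg G n \<sigma> \<tau> Y \<in> carrier_mat n n"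
  by (simp add: intertwiner_avg_def)

lemma intertwiner_avg_intertwines:
  assumes G: "group G" and s: "is_rep G n \<sigma>" and t: "is_rep G n \<tau>"
    and Y: "Y \<in> carrier_mat n n" and h: "h \<in> carrier G"
  shows "\<sigma> h * intertwiner_avg G n \<sigma> \<tau> Y = intertwiner_avg G n \<sigma> \<tau> Y * \<tau> h"
proof -
  interpret group G by fact
  have sc: "\<And>g. g \<in> carrier G \<Longrightarrow> \<sigma> g \<in> carrier_mat n n" by (rule rep_carrier[OF s])
  have tc: "\<And>g. g \<in> carrier G \<Longrightarrow> \<tau> g \<in> carrier_mat n n" by (rule rep_carrier[OF t])
  have "\<sigma> h * intertwiner_avg G n \<sigma> \<tau> Y = mat_sum n (carrier G) (\<lambda>g. \<sigma> h * (\<sigma> g * Y * \<tau> (inv\<^bsub>G\<^esub> g)))"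
    unfolding intertwiner_avg_def using h Y by (intro mult_mat_sum) (auto intro!: mult_carrier_mat sc tc)
  also have "\<dots> = mat_sum n (carrier G) (\<lambda>g. \<sigma> (h \<otimes>\<^bsub>G\<^esub> g) * Y * \<tau> (inv\<^bsub>G\<^esub> (h \<otimes>\<^bsub>G\<^esub> g) \<otimes>\<^bsub>G\<^esub> h))"
  proof (intro mat_sum_cong)
    fix g assume g: "g \<in> carrier G"
    have "inv\<^bsub>G\<^esub> (h \<otimes>\<^bsub>G\<^esub> g) \<otimes>\<^bsub>G\<^esub> h = inv\<^bsub>G\<^esub> g" using g h by (simp add: inv_mult_group m_assoc)
    thus "\<sigma> h * (\<sigma> g * Y * \<tau> (inv\<^bsub>G\<^esub> g)) = \<sigma> (h \<otimes>\<^bsub>G\<^esub> g) * Y * \<tau> (inv\<^bsub>G\<^esub> (h \<otimes>\<^bsub>G\<^esub> g) \<otimes>\<^bsub>G\<^esub> h)"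
      using rep_mult[OF s h g] sc[OF h] sc[OF g] tc[of "inv\<^bsub>G\<^esub> g"] g Y
      by (simp add: assoc_mult_mat[of _ n n _ n _ n])
  qed
  also have "\<dots> = mat_sum n (carrier G) (\<lambda>g. \<sigma> g * Y * \<tau> (inv\<^bsub>G\<^esub> g \<otimes>\<^bsub>G\<^esub> h))"
    by (rule mat_sum_reindex[OF group_mult_left_bij[OF G h]])
  also have "\<dots> = mat_sum n (carrier G) (\<lambda>g. \<sigma> g * Y * \<tau> (inv\<^bsub>G\<^esub> g) * \<tau> h)"
  proof (intro mat_sum_cong)
    fix g assume g: "g \<in> carrier G"
    have ig: "inv\<^bsub>G\<^esub> g \<in> carrier G" using g by simp
    show "\<sigma> g * Y * \<tau> (inv\<^bsub>G\<^esub> g \<otimes>\<^bsub>G\<^esub> h) = \<sigma> g * Y * \<tau> (inv\<^bsub>G\<^esub> g) * \<tau> h"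
      using rep_mult[OF t ig h] sc[OF g] tc[OF ig] tc[OF h] Y by (simp add: assoc_mult_mat[of _ n n _ n _ n])
  qed
  also have "\<dots> = intertwiner_avg G n \<sigma> \<tau> Y * \<tau> h"
    unfolding intertwiner_avg_def using h Y by (intro mat_sum_mult[symmetric]) (auto intro!: mult_carrier_mat sc tc)
  finally show ?thesis .
qed

lemma intertwiner_avg_diag_sum:
  assumes G: "group G" and s: "is_rep G n \<sigma>" and t: "is_rep G n \<tau>"
  shows "(\<Sum>i<n. \<Sum>j<n. intertwiner_avg G n \<sigma> \<tau> (mat_unit n i j) $$ (i,j))
       = (\<Sum>g\<in>carrier G. mat_trace (\<sigma> g) * mat_trace (\<tau> (inv\<^bsub>G\<^esub> g)))"
proof -
  have sc: "\<And>g. g \<in> carrier G \<Longrightarrow> \<sigma> g \<in> carrier_mat n n" by (rule rep_carrier[OF s])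
  have tc: "\<And>g. g \<in> carrier G \<Longrightarrow> \<tau> (inv\<^bsub>G\<^esub> g) \<in> carrier_mat n n"
    by (rule rep_carrier[OF t]) (simp add: G group.inv_closed)
  have "(\<Sum>i<n. \<Sum>j<n. intertwiner_avg G n \<sigma> \<tau> (mat_unit n i j) $$ (i,j))
      = (\<Sum>i<n. \<Sum>j<n. \<Sum>g\<in>carrier G. \<sigma> g $$ (i,i) * \<tau> (inv\<^bsub>G\<^esub> g) $$ (j,j))"
    unfolding intertwiner_avg_def
    by (intro sum.cong refl) (simp add: index_mat_sum index_mult_mat_unit_mult[OF sc tc])
  also have "\<dots> = (\<Sum>i<n. \<Sum>g\<in>carrier G. \<Sum>j<n. \<sigma> g $$ (i,i) * \<tau> (inv\<^bsub>G\<^esub> g) $$ (j,j))"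
    by (intro sum.cong refl) (rule sum.swap)
  also have "\<dots> = (\<Sum>g\<in>carrier G. \<Sum>i<n. \<Sum>j<n. \<sigma> g $$ (i,i) * \<tau> (inv\<^bsub>G\<^esub> g) $$ (j,j))"
    by (rule sum.swap)
  also have "\<dots> = (\<Sum>g\<in>carrier G. mat_trace (\<sigma> g) * mat_trace (\<tau> (inv\<^bsub>G\<^esub> g)))"
  proof (intro sum.cong refl)
    fix g assume g: "g \<in> carrier G"
    show "(\<Sum>i<n. \<Sum>j<n. \<sigma> g $$ (i,i) * \<tau> (inv\<^bsub>G\<^esub> g) $$ (j,j))
        = mat_trace (\<sigma> g) * mat_trace (\<tau> (inv\<^bsub>G\<^esub> g))"
      using sc[OF g] tc[OF g] by (simp add: mat_trace_def sum_product)
  qed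
  finally show ?thesis .
qed

lemma intertwiner_avg_self_mat_unit:
  assumes G: "group G" and irr: "irreducible_rep G n \<tau>" and i: "i < n" and j: "j < n"
  shows "intertwiner_avg G n \<tau> \<tau> (mat_unit n i j)
     = (of_nat (card (carrier G)) * (if i = j then 1 else 0) / of_nat n) \<cdot>\<^sub>m 1\<^sub>m n"
proof -
  have t: "is_rep G n \<tau>" using irr by (simp add: irreducible_rep_def)
  have tc: "\<And>g. g \<in> carrier G \<Longrightarrow> \<tau> g \<in> carrier_mat n n" by (rule rep_carrier[OF t])
  have itc: "\<And>g. g \<in> carrier G \<Longrightarrow> \<tau> (inv\<^bsub>G\<^esub> g) \<in> carrier_mat n n"
    by (rule rep_carrier[OF t]) (simp add: G group.inv_closed)
  obtain c where c: "intertwiner_avg G n \<tau> \<tau> (mat_unit n i j) = c \<cdot>\<^sub>m 1\<^sub>m n"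
    using schur_scalar[OF irr intertwiner_avg_carrier] intertwiner_avg_intertwines[OF G t t mat_unit_carrier]
    by metis
  have conj_trace: "mat_trace (\<tau> g * mat_unit n i j * \<tau> (inv\<^bsub>G\<^esub> g)) = mat_trace (mat_unit n i j)"
    if g: "g \<in> carrier G" for g
  proof -
    have "mat_trace (\<tau> g * mat_unit n i j * \<tau> (inv\<^bsub>G\<^esub> g))
        = mat_trace (\<tau> (inv\<^bsub>G\<^esub> g) * (\<tau> g * mat_unit n i j))"
      by (rule mat_trace_mult_comm[of _ n n]) (auto intro!: mult_carrier_mat tc itc g)
    also have "\<dots> = mat_trace ((\<tau> (inv\<^bsub>G\<^esub> g) * \<tau> g) * mat_unit n i j)"
      using tc[OF g] itc[OF g] by (simp add: assoc_mult_mat[of _ n n _ n _ n])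
    finally show ?thesis using rep_inv[OF G t g] left_mult_one_mat[OF mat_unit_carrier] by simp
  qed
  have "c * of_nat n = mat_trace (intertwiner_avg G n \<tau> \<tau> (mat_unit n i j))"
    using c by (simp add: mat_trace_smult[of "1\<^sub>m n" n] mat_trace_one)
  also have "\<dots> = (\<Sum>g\<in>carrier G. mat_trace (\<tau> g * mat_unit n i j * \<tau> (inv\<^bsub>G\<^esub> g)))"
    unfolding intertwiner_avg_def by (rule mat_trace_mat_sum) (auto intro!: mult_carrier_mat tc itc)
  also have "\<dots> = of_nat (card (carrier G)) * (if i = j then 1 else 0)"
    using conj_trace mat_trace_mat_unit[OF i j] by simp
  finally have "c = of_nat (card (carrier G)) * (if i = j then 1 else 0) / of_nat n"
    using rep_pos[OF t] by (simp add: field_simps)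
  thus ?thesis using c by simp
qed

lemma intertwiner_avg_self_diag_sum:
  assumes G: "group G" and irr: "irreducible_rep G n \<tau>"
  shows "(\<Sum>i<n. \<Sum>j<n. intertwiner_avg G n \<tau> \<tau> (mat_unit n i j) $$ (i,j)) = of_nat (card (carrier G))"
proof -
  have n: "0 < n" using irr by (simp add: irreducible_rep_def is_rep_def)
  have "(\<Sum>i<n. \<Sum>j<n. intertwiner_avg G n \<tau> \<tau> (mat_unit n i j) $$ (i,j))
      = (\<Sum>i<n. \<Sum>j<n. if j = i then of_nat (card (carrier G)) / of_nat n else 0)"
    by (intro sum.cong refl) (auto simp: intertwiner_avg_self_mat_unit[OF G irr])
  also have "\<dots> = of_nat (card (carrier G))" using n by (simp add: sum.delta)
  finally show ?thesis .
qed

lemma invariant_subspace_preimage: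
  assumes s: "is_rep G n \<sigma>" and t: "is_rep G n \<tau>" and T: "T \<in> carrier_mat n n"
    and intw: "\<And>h. h \<in> carrier G \<Longrightarrow> \<sigma> h * T = T * \<tau> h"
    and W: "invariant_subspace G n \<sigma> W"
  shows "invariant_subspace G n \<tau> {x \<in> carrier_vec n. T *\<^sub>v x \<in> W}"
proof -
  have Wc: "W \<subseteq> carrier_vec n" "0\<^sub>v n \<in> W" "\<And>v w. v \<in> W \<Longrightarrow> w \<in> W \<Longrightarrow> v + w \<in> W"
     "\<And>c v. v \<in> W \<Longrightarrow> c \<cdot>\<^sub>v v \<in> W"
    using W by (auto simp: invariant_subspace_def is_subspace_def)
  have "\<tau> g *\<^sub>v w \<in> carrier_vec n \<and> T *\<^sub>v (\<tau> g *\<^sub>v w) \<in> W"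
    if g: "g \<in> carrier G" and w: "w \<in> carrier_vec n" "T *\<^sub>v w \<in> W" for g w
  proof -
    have "T *\<^sub>v (\<tau> g *\<^sub>v w) = \<sigma> g *\<^sub>v (T *\<^sub>v w)"
      using T rep_carrier[OF t g] rep_carrier[OF s g] w intw[OF g] by (metis assoc_mult_mat_vec)
    thus ?thesis using W g w rep_carrier[OF t g] by (simp add: invariant_subspace_def)
  qed
  thus ?thesis using T Wc rep_carrier[OF t]
    by (auto simp: invariant_subspace_def is_subspace_def mult_mat_vec_zero mult_add_distrib_mat_vec mult_mat_vec)
qed

lemma intertwiner_invertible:
  assumes tau: "irreducible_rep G n \<tau>" and s: "is_rep G n \<sigma>"
    and T: "T \<in> carrier_mat n n" and T0: "T \<noteq> 0\<^sub>m n n"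
    and intw: "\<And>h. h \<in> carrier G \<Longrightarrow> \<sigma> h * T = T * \<tau> h"
  obtains Ti where "Ti \<in> carrier_mat n n" "T * Ti = 1\<^sub>m n"
proof -
  define Ker where "Ker = {x \<in> carrier_vec n. T *\<^sub>v x \<in> {0\<^sub>v n}}"
  have t: "is_rep G n \<tau>" using tau by (simp add: irreducible_rep_def)
  have "invariant_subspace G n \<sigma> {0\<^sub>v n}"
    using rep_carrier[OF s] by (auto simp: invariant_subspace_def is_subspace_def mult_mat_vec_zero smult_zero_vec)
  hence "invariant_subspace G n \<tau> Ker"
    unfolding Ker_def using invariant_subspace_preimage[OF s t T intw] by blast
  hence Ker: "Ker = {0\<^sub>v n} \<or> Ker = carrier_vec n" by (rule irreducible_repD[OF tau])
  have "Ker \<noteq> carrier_vec n"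
  proof
    assume "Ker = carrier_vec n"
    hence "T = 0\<^sub>m n n"
      by (intro mat_eq_if_mult_vec_eq[OF T zero_carrier_mat])
         (auto simp: Ker_def set_eq_iff zero_mult_mat_vec)
    thus False using T0 by simp
  qed
  hence "det T \<noteq> 0"
    using Ker det_0_iff_vec_prod_zero[OF T] by (auto simp: Ker_def)
  from det_non_zero_imp_unit[OF T this, of "()"] show ?thesis
    using that unfolding Units_def ring_mat_def by auto
qed

lemma irreducible_rep_if_intertwined:
  assumes tau: "irreducible_rep G n \<tau>" and s: "is_rep G n \<sigma>"
    and T: "T \<in> carrier_mat n n" and T0: "T \<noteq> 0\<^sub>m n n"
    and intw: "\<And>h. h \<in> carrier G \<Longrightarrow> \<sigma> h * T = T * \<tau> h"
  shows "irreducible_rep G n \<sigma>"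
  unfolding irreducible_rep_iff
proof (intro conjI s allI impI)
  fix W assume W: "invariant_subspace G n \<sigma> W"
  have t: "is_rep G n \<tau>" using tau by (simp add: irreducible_rep_def)
  obtain Ti where Ti: "Ti \<in> carrier_mat n n" "T * Ti = 1\<^sub>m n"
    using intertwiner_invertible[OF tau s T T0 intw] by blast
  have TTi: "\<And>w. w \<in> carrier_vec n \<Longrightarrow> T *\<^sub>v (Ti *\<^sub>v w) = w"
    using T Ti by (simp add: assoc_mult_mat_vec[symmetric])
  have Wc: "W \<subseteq> carrier_vec n" "0\<^sub>v n \<in> W" using W by (auto simp: invariant_subspace_def is_subspace_def)
  define W' where "W' = {x \<in> carrier_vec n. T *\<^sub>v x \<in> W}"
  have "W' = {0\<^sub>v n} \<or> W' = carrier_vec n"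
    unfolding W'_def by (rule irreducible_repD[OF tau invariant_subspace_preimage[OF s t T intw W]])
  moreover have "W \<subseteq> {0\<^sub>v n}" if W'0: "W' = {0\<^sub>v n}"
  proof
    fix w assume w: "w \<in> W"
    hence wc: "w \<in> carrier_vec n" using Wc by auto
    have "Ti *\<^sub>v w \<in> W'" using TTi[OF wc] w wc Ti by (simp add: W'_def)
    hence "w = T *\<^sub>v 0\<^sub>v n" using W'0 TTi[OF wc] by simp
    thus "w \<in> {0\<^sub>v n}" using T by (simp add: mult_mat_vec_zero)
  qed
  moreover have "carrier_vec n \<subseteq> W" if "W' = carrier_vec n"
  proof
    fix w :: "complex vec" assume wc: "w \<in> carrier_vec n"
    have "Ti *\<^sub>v w \<in> W'" using that Ti wc by simp
    thus "w \<in> W" using TTi[OF wc] by (simp add: W'_def)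
  qed
  ultimately show "W = {0\<^sub>v n} \<or> W = carrier_vec n" using Wc by blast
qed

text \<open>The character inner product being nonzero, some averaged intertwiner is nonzero, hence
  invertible.\<close>

lemma irreducible_rep_if_same_traces:
  assumes G: "group G" and fin: "finite (carrier G)"
    and tau: "irreducible_rep G n \<tau>" and sig: "is_rep G m \<sigma>"
    and tr: "\<And>g. g \<in> carrier G \<Longrightarrow> mat_trace (\<sigma> g) = mat_trace (\<tau> g)"
  shows "irreducible_rep G m \<sigma>"
proof -
  have t: "is_rep G n \<tau>" using tau by (simp add: irreducible_rep_def)
  have one: "\<one>\<^bsub>G\<^esub> \<in> carrier G" using G by (simp add: group.is_monoid monoid.one_closed)
  have mn: "m = n" using tr[OF one] rep_one[OF sig] rep_one[OF t] by (simp add: mat_trace_one)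
  have sig': "is_rep G n \<sigma>" using sig mn by simp
  have "(\<Sum>i<n. \<Sum>j<n. intertwiner_avg G n \<sigma> \<tau> (mat_unit n i j) $$ (i,j))
      = (\<Sum>i<n. \<Sum>j<n. intertwiner_avg G n \<tau> \<tau> (mat_unit n i j) $$ (i,j))"
    using tr by (simp add: intertwiner_avg_diag_sum[OF G sig' t] intertwiner_avg_diag_sum[OF G t t])
  also have "\<dots> \<noteq> 0"
    using fin one by (simp add: intertwiner_avg_self_diag_sum[OF G tau] card_eq_0_iff) blast
  finally have S: "(\<Sum>i<n. \<Sum>j<n. intertwiner_avg G n \<sigma> \<tau> (mat_unit n i j) $$ (i,j)) \<noteq> 0" .
  have "\<exists>i<n. \<exists>j<n. intertwiner_avg G n \<sigma> \<tau> (mat_unit n i j) \<noteq> 0\<^sub>m n n"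
  proof (rule ccontr)
    assume "\<not> ?thesis"
    hence "\<And>i j. i < n \<Longrightarrow> j < n \<Longrightarrow> intertwiner_avg G n \<sigma> \<tau> (mat_unit n i j) $$ (i,j) = 0" by auto
    thus False using S by simp
  qed
  then obtain i j where "i < n" "j < n" and T0: "intertwiner_avg G n \<sigma> \<tau> (mat_unit n i j) \<noteq> 0\<^sub>m n n"
    by blast
  have "irreducible_rep G n \<sigma>"
    by (rule irreducible_rep_if_intertwined[OF tau sig' intertwiner_avg_carrier T0])
       (rule intertwiner_avg_intertwines[OF G sig' t mat_unit_carrier])
  thus ?thesis using mn by simp
qed

lemma conjc_conjc:
  assumes G: "group G" and a: "a \<in> carrier G" and b: "b \<in> carrier G"
  shows "conjc G a (conjc G b f) = conjc G (a \<otimes>\<^bsub>G\<^esub> b) f"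
proof
  fix x
  interpret group G by fact
  show "conjc G a (conjc G b f) x = conjc G (a \<otimes>\<^bsub>G\<^esub> b) f x"
    using a b by (simp add: conjc_def inv_mult_group m_assoc)
qed

lemma conjc_one:
  assumes G: "group G" and f: "\<And>x. x \<notin> carrier G \<Longrightarrow> f x = 0"
  shows "conjc G \<one>\<^bsub>G\<^esub> f = f"
proof
  fix x
  interpret group G by fact
  show "conjc G \<one>\<^bsub>G\<^esub> f x = f x" using f by (simp add: conjc_def)
qed

lemma conjc_inv_conjc:
  assumes G: "group G" and m: "m \<in> carrier G" and f: "\<And>x. x \<notin> carrier G \<Longrightarrow> f x = 0"
  shows "conjc G (inv\<^bsub>G\<^esub> m) (conjc G m f) = f"
  using conjc_conjc[OF G group.inv_closed[OF G m] m] conjc_one[OF G f] m G by (simp add: group.l_inv)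

lemma stab_subgroup:
  assumes G: "group G" and f: "\<And>x. x \<notin> carrier G \<Longrightarrow> f x = 0"
  shows "subgroup (stab G f) G"
proof -
  interpret group G by fact
  show ?thesis
  proof (rule subgroupI)
    show "stab G f \<subseteq> carrier G" by (auto simp: stab_def)
    show "stab G f \<noteq> {}" using conjc_one[OF G f] by (auto simp: stab_def)
  next
    fix a assume "a \<in> stab G f"
    hence a: "a \<in> carrier G" and fa: "conjc G a f = f" by (auto simp: stab_def)
    have "conjc G (inv\<^bsub>G\<^esub> a) f = f" using conjc_inv_conjc[of G a f, OF G a f] fa by simp
    thus "inv\<^bsub>G\<^esub> a \<in> stab G f" using a by (simp add: stab_def)
  next
    fix a b assume "a \<in> stab G f" "b \<in> stab G f"
    thus "a \<otimes>\<^bsub>G\<^esub> b \<in> stab G f" by (simp add: stab_def conjc_conjc[OF G, symmetric])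
  qed
qed

lemma subgroup_conj_mem_iff:
  assumes G: "group G" and S: "subgroup S G" and g: "g \<in> S" and x: "x \<in> carrier G"
  shows "inv\<^bsub>G\<^esub> g \<otimes>\<^bsub>G\<^esub> x \<otimes>\<^bsub>G\<^esub> g \<in> S \<longleftrightarrow> x \<in> S"
proof -
  interpret group G by fact
  have gc: "g \<in> carrier G" using subgroup.mem_carrier[OF S g] .
  have "x = g \<otimes>\<^bsub>G\<^esub> (inv\<^bsub>G\<^esub> g \<otimes>\<^bsub>G\<^esub> x \<otimes>\<^bsub>G\<^esub> g) \<otimes>\<^bsub>G\<^esub> inv\<^bsub>G\<^esub> g"
    using gc x by (simp add: m_assoc[symmetric]) (simp add: m_assoc)
  thus ?thesis using S g by (metis subgroup.m_closed subgroup.m_inv_closed)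
qed

lemma Irr_conjc_invariant:
  assumes G: "group G" and S: "subgroup S G" and psi: "\<psi> \<in> Irr (G\<lparr>carrier := S\<rparr>)" and g: "g \<in> S"
  shows "conjc G g \<psi> = \<psi>"
proof
  fix x
  obtain m \<rho> where irr: "irreducible_rep (G\<lparr>carrier := S\<rparr>) m \<rho>"
    and psi_eq: "\<psi> = (\<lambda>x. if x \<in> S then mat_trace (\<rho> x) else 0)"
    using psi unfolding Irr_def by auto
  have GS: "group (G\<lparr>carrier := S\<rparr>)" using subgroup.subgroup_is_group[OF S G] .
  have gc: "g \<in> carrier G" and ig: "inv\<^bsub>G\<^esub> g \<in> S"
    using S g by (auto intro: subgroup.mem_carrier subgroup.m_inv_closed)
  have inv_ig: "inv\<^bsub>G\<lparr>carrier := S\<rparr>\<^esub> (inv\<^bsub>G\<^esub> g) = g"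
    using group.m_inv_consistent[OF G S ig] gc G by (simp add: group.inv_inv)
  show "conjc G g \<psi> x = \<psi> x"
  proof (cases "x \<in> S")
    case True
    have "mat_trace (\<rho> (inv\<^bsub>G\<^esub> g \<otimes>\<^bsub>G\<lparr>carrier := S\<rparr>\<^esub> x \<otimes>\<^bsub>G\<lparr>carrier := S\<rparr>\<^esub> inv\<^bsub>G\<lparr>carrier := S\<rparr>\<^esub> (inv\<^bsub>G\<^esub> g)))
         = mat_trace (\<rho> x)"
      using rep_trace_conj[OF GS, of m \<rho> "inv\<^bsub>G\<^esub> g" x] irr ig True by (simp add: irreducible_rep_def)
    thus ?thesis using True inv_ig subgroup_conj_mem_iff[OF G S g] subgroup.mem_carrier[OF S True]
      by (simp add: conjc_def psi_eq)
  next
    case False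
    thus ?thesis using subgroup_conj_mem_iff[OF G S g] by (simp add: conjc_def psi_eq)
  qed
qed

lemma (in group) mult_inv_cancel_left: "x \<in> carrier G \<Longrightarrow> y \<in> carrier G \<Longrightarrow> x \<otimes> (inv x \<otimes> y) = y"
  by (simp add: m_assoc[symmetric])

lemma (in group) inv_mult_cancel_left: "x \<in> carrier G \<Longrightarrow> y \<in> carrier G \<Longrightarrow> inv x \<otimes> (x \<otimes> y) = y"
  by (simp add: m_assoc[symmetric])

lemmas (in group) cancel_simps = m_assoc mult_inv_cancel_left inv_mult_cancel_left inv_mult_group

lemma (in group) commute_inv: assumes a: "a \<in> carrier G" and k: "k \<in> carrier G" and h: "a \<otimes> k = k \<otimes> a"
  shows "inv a \<otimes> k = k \<otimes> inv a"
proof -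
  have "inv a \<otimes> k = inv a \<otimes> ((k \<otimes> a) \<otimes> inv a)" using a k by (simp add: m_assoc)
  also have "\<dots> = inv a \<otimes> ((a \<otimes> k) \<otimes> inv a)" using h by simp
  also have "\<dots> = k \<otimes> inv a" using a k by (simp add: m_assoc inv_mult_cancel_left)
  finally show ?thesis .
qed

lemma (in group) commute_conj: assumes m: "m \<in> carrier G" and z: "z \<in> carrier G" and k: "k \<in> carrier G"
  and h: "z \<otimes> (inv m \<otimes> k \<otimes> m) = (inv m \<otimes> k \<otimes> m) \<otimes> z"
  shows "(m \<otimes> z \<otimes> inv m) \<otimes> k = k \<otimes> (m \<otimes> z \<otimes> inv m)"
proof -
  define k' where "k' = inv m \<otimes> k \<otimes> m"
  have k'c: "k' \<in> carrier G" using m k by (simp add: k'_def)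
  have kk: "k = m \<otimes> k' \<otimes> inv m" using m k by (simp add: k'_def m_assoc mult_inv_cancel_left)
  have "(m \<otimes> z \<otimes> inv m) \<otimes> (m \<otimes> k' \<otimes> inv m) = m \<otimes> (z \<otimes> k') \<otimes> inv m"
    using m z k'c by (simp add: m_assoc inv_mult_cancel_left)
  also have "\<dots> = m \<otimes> (k' \<otimes> z) \<otimes> inv m" using h by (simp add: k'_def)
  also have "\<dots> = (m \<otimes> k' \<otimes> inv m) \<otimes> (m \<otimes> z \<otimes> inv m)"
    using m z k'c by (simp add: m_assoc inv_mult_cancel_left)
  finally show ?thesis using kk by simp
qed

locale ext_map_setting =
  fixes M :: "('g, 'b) monoid_scheme" (structure) and E :: "('e, 'c) monoid_scheme"
    and \<alpha> :: "'e \<Rightarrow> 'g \<Rightarrow> 'g"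
    and K K0 V :: "'g set" and KK :: "('g \<Rightarrow> complex) set"
    and \<Lambda>0 :: "('g \<Rightarrow> complex) \<Rightarrow> ('g \<Rightarrow> complex)"
    and \<Lambda>e :: "('g \<times> 'g set \<Rightarrow> complex) \<Rightarrow> ('g \<times> 'g set \<Rightarrow> complex)"
  assumes grp: "group M" and fin: "finite (carrier M)"
    and Knorm: "K \<lhd> M" and K0norm: "K0 \<lhd> M" and K0K: "K0 \<subseteq> K"
    and act: "acts_by_auts E M \<alpha>"
    and aK: "\<forall>e\<in>carrier E. \<alpha> e ` K = K" and aK0: "\<forall>e\<in>carrier E. \<alpha> e ` K0 = K0"
    and KKirr: "KK \<subseteq> Irr (M\<lparr>carrier := K\<rparr>)"
    and KKconj: "\<forall>m\<in>carrier M. \<forall>\<chi>\<in>KK. conjc M m \<chi> \<in> KK"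
    and KKaut: "\<forall>e\<in>carrier E. \<forall>\<chi>\<in>KK. autc M E \<alpha> e \<chi> \<in> KK"
    and K_eq_ZK0: "K = center M K <#>\<^bsub>M\<^esub> K0"
    and Vsub: "subgroup V M" and aV: "\<forall>e\<in>carrier E. \<alpha> e ` V = V"
    and M_eq_KV: "carrier M = K <#>\<^bsub>M\<^esub> V" and H_sub_Z: "V \<inter> K \<subseteq> center M K"
    and L0_ext: "ext_map (M\<lparr>carrier := V\<rparr>) (V \<inter> K) (\<Union>\<chi>\<in>KK. Irr_under M (V \<inter> K) \<chi>) \<Lambda>0"
    and L0_conj: "conj_equivariant (M\<lparr>carrier := V\<rparr>) V (\<Union>\<chi>\<in>KK. Irr_under M (V \<inter> K) \<chi>) \<Lambda>0"
    and L0_aut: "aut_equivariant (M\<lparr>carrier := V\<rparr>) E \<alpha> (\<Union>\<chi>\<in>KK. Irr_under M (V \<inter> K) \<chi>) \<Lambda>0"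
    and Le_ext: "ext_map (sdp M K0 V (V \<inter> K)) (K0 \<times> {V \<inter> K})
                      (emb0 (V \<inter> K) ` (\<Union>\<chi>\<in>KK. Irr_under M K0 \<chi>)) \<Lambda>e"
    and Le_conj: "conj_equivariant (sdp M K0 V (V \<inter> K)) ({\<one>\<^bsub>M\<^esub>} \<times> rcosets\<^bsub>M\<lparr>carrier := V\<rparr>\<^esub> (V \<inter> K))
                      (emb0 (V \<inter> K) ` (\<Union>\<chi>\<in>KK. Irr_under M K0 \<chi>)) \<Lambda>e"
    and Le_aut: "aut_equivariant (sdp M K0 V (V \<inter> K)) E (sdp_act \<alpha>)
                      (emb0 (V \<inter> K) ` (\<Union>\<chi>\<in>KK. Irr_under M K0 \<chi>)) \<Lambda>e"
begin

abbreviation "H \<equiv> V \<inter> K"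
abbreviation "Z \<equiv> center M K"
abbreviation "GV \<equiv> M\<lparr>carrier := V\<rparr>"
abbreviation "SD \<equiv> sdp M K0 V (V \<inter> K)"
abbreviation "GK \<equiv> M\<lparr>carrier := K\<rparr>"
abbreviation "GK0 \<equiv> M\<lparr>carrier := K0\<rparr>"
abbreviation "GH \<equiv> M\<lparr>carrier := H\<rparr>"

sublocale group M by (rule grp)

lemma Ksub: "subgroup K M" using Knorm by (simp add: normal_def)

lemma K0sub: "subgroup K0 M" using K0norm by (simp add: normal_def)

lemma KM: "K \<subseteq> carrier M" using Ksub by (simp add: subgroup.subset)

lemma K0M: "K0 \<subseteq> carrier M" using K0sub by (simp add: subgroup.subset)

lemma VM: "V \<subseteq> carrier M" using Vsub by (simp add: subgroup.subset)

lemma K_conj: "m \<in> carrier M \<Longrightarrow> k \<in> K \<Longrightarrow> m \<otimes> k \<otimes> inv m \<in> K"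
  using Knorm by (simp add: normal.inv_op_closed2)

lemma K_conj': "m \<in> carrier M \<Longrightarrow> k \<in> K \<Longrightarrow> inv m \<otimes> k \<otimes> m \<in> K"
  using Knorm by (simp add: normal.inv_op_closed1)

lemma K0_conj: "m \<in> carrier M \<Longrightarrow> k \<in> K0 \<Longrightarrow> m \<otimes> k \<otimes> inv m \<in> K0"
  using K0norm by (simp add: normal.inv_op_closed2)

lemma K0_conj': "m \<in> carrier M \<Longrightarrow> k \<in> K0 \<Longrightarrow> inv m \<otimes> k \<otimes> m \<in> K0"
  using K0norm by (simp add: normal.inv_op_closed1)

lemma K_mult: "a \<in> K \<Longrightarrow> b \<in> K \<Longrightarrow> a \<otimes> b \<in> K" using Ksub by (simp add: subgroup.m_closed)

lemma K_inv: "a \<in> K \<Longrightarrow> inv a \<in> K" using Ksub by (simp add: subgroup.m_inv_closed)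

lemma K_one: "\<one> \<in> K" using Ksub by (simp add: subgroup.one_closed)

lemma K0_mult: "a \<in> K0 \<Longrightarrow> b \<in> K0 \<Longrightarrow> a \<otimes> b \<in> K0" using K0sub by (simp add: subgroup.m_closed)

lemma K0_inv: "a \<in> K0 \<Longrightarrow> inv a \<in> K0" using K0sub by (simp add: subgroup.m_inv_closed)

lemma K0_one: "\<one> \<in> K0" using K0sub by (simp add: subgroup.one_closed)

lemma V_mult: "a \<in> V \<Longrightarrow> b \<in> V \<Longrightarrow> a \<otimes> b \<in> V" using Vsub by (simp add: subgroup.m_closed)

lemma V_inv: "a \<in> V \<Longrightarrow> inv a \<in> V" using Vsub by (simp add: subgroup.m_inv_closed)

lemma V_one: "\<one> \<in> V" using Vsub by (simp add: subgroup.one_closed)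

lemma inK: "a \<in> K \<Longrightarrow> a \<in> carrier M" using KM by auto

lemma inK0: "a \<in> K0 \<Longrightarrow> a \<in> carrier M" using K0M by auto

lemma inV: "a \<in> V \<Longrightarrow> a \<in> carrier M" using VM by auto

lemma K0_K: "a \<in> K0 \<Longrightarrow> a \<in> K" using K0K by auto

lemma Z_K: "z \<in> Z \<Longrightarrow> z \<in> K" by (simp add: center_def)

lemma Z_comm: "z \<in> Z \<Longrightarrow> k \<in> K \<Longrightarrow> z \<otimes> k = k \<otimes> z" by (simp add: center_def)

lemma inZ: "z \<in> Z \<Longrightarrow> z \<in> carrier M" using Z_K inK by blast

lemma Z_one: "\<one> \<in> Z" using K_one KM by (auto simp: center_def)

lemma Z_mult: assumes "a \<in> Z" "b \<in> Z" shows "a \<otimes> b \<in> Z"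
proof -
  have ab: "a \<in> K" "b \<in> K" "a \<in> carrier M" "b \<in> carrier M" using assms Z_K inZ by auto
  have "(a \<otimes> b) \<otimes> k = k \<otimes> (a \<otimes> b)" if k: "k \<in> K" for k
  proof -
    have kc: "k \<in> carrier M" using k inK by auto
    have "(a \<otimes> b) \<otimes> k = a \<otimes> (k \<otimes> b)" using ab kc Z_comm[OF assms(2) k] by (simp add: m_assoc)
    also have "\<dots> = (a \<otimes> k) \<otimes> b" using ab kc by (simp add: m_assoc)
    also have "\<dots> = k \<otimes> (a \<otimes> b)" using ab kc Z_comm[OF assms(1) k] by (simp add: m_assoc)
    finally show ?thesis .
  qed
  thus ?thesis using K_mult[OF ab(1,2)] by (simp add: center_def)
qed

lemma Z_inv: assumes "a \<in> Z" shows "inv a \<in> Z"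
proof -
  have a: "a \<in> K" "a \<in> carrier M" using assms Z_K inZ by auto
  have "inv a \<otimes> k = k \<otimes> inv a" if k: "k \<in> K" for k
    using commute_inv[OF a(2) inK[OF k] Z_comm[OF assms k]] .
  thus ?thesis using K_inv[OF a(1)] by (simp add: center_def)
qed

lemma Z_conj: assumes m: "m \<in> carrier M" and z: "z \<in> Z" shows "m \<otimes> z \<otimes> inv m \<in> Z"
proof -
  have zc: "z \<in> K" "z \<in> carrier M" using z Z_K inZ by auto
  have "(m \<otimes> z \<otimes> inv m) \<otimes> k = k \<otimes> (m \<otimes> z \<otimes> inv m)" if k: "k \<in> K" for k
    using commute_conj[OF m zc(2) inK[OF k] Z_comm[OF z K_conj'[OF m k]]] .
  thus ?thesis using K_conj[OF m zc(1)] by (simp add: center_def)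
qed

lemma H_Z: "h \<in> H \<Longrightarrow> h \<in> Z" using H_sub_Z by auto

lemma Hsub: "subgroup H M" using Vsub Ksub by (rule subgroups_Inter_pair)

lemma H_conjV: "v \<in> V \<Longrightarrow> h \<in> H \<Longrightarrow> v \<otimes> h \<otimes> inv v \<in> H"
  using K_conj[of v h] V_mult V_inv inV by auto

lemma H_central: "h \<in> H \<Longrightarrow> k \<in> K \<Longrightarrow> h \<otimes> k \<otimes> inv h = k"
proof -
  assume h: "h \<in> H" and k: "k \<in> K"
  have hc: "h \<in> carrier M" "k \<in> carrier M" using h k inK by auto
  have "h \<otimes> k = k \<otimes> h" using Z_comm[OF H_Z[OF h] k] .
  thus ?thesis using hc by (simp add: m_assoc)
qed

lemma K_decomp: assumes "k \<in> K" obtains z k0 where "z \<in> Z" "k0 \<in> K0" "k = z \<otimes> k0"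
  using assms K_eq_ZK0 unfolding set_mult_def by blast

lemma M_decomp: assumes "m \<in> carrier M"
  obtains z k0 v where "z \<in> Z" "k0 \<in> K0" "v \<in> V" "m = z \<otimes> k0 \<otimes> v"
proof -
  obtain k v where kv: "k \<in> K" "v \<in> V" "m = k \<otimes> v" using assms M_eq_KV unfolding set_mult_def by blast
  obtain z k0 where "z \<in> Z" "k0 \<in> K0" "k = z \<otimes> k0" using K_decomp[OF kv(1)] by blast
  thus ?thesis using that kv by blast
qed

lemma invGV: "x \<in> V \<Longrightarrow> inv\<^bsub>GV\<^esub> x = inv x" by (rule m_inv_consistent[OF Vsub])

lemma GV_group: "group GV" using Vsub by (rule subgroup.subgroup_is_group) (rule grp)

lemma GK0_group: "group GK0" using K0sub by (rule subgroup.subgroup_is_group) (rule grp)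

lemma H_normal_GV: "H \<lhd> GV"
proof -
  interpret GV: group GV by (rule GV_group)
  have sub: "subgroup H GV"
    using Hsub unfolding subgroup_def by (auto simp: invGV)
  show ?thesis unfolding GV.normal_inv_iff
    using sub H_conjV by (auto simp: m_inv_consistent[OF Vsub])
qed

lemma K0_conjV: "v \<in> V \<Longrightarrow> k \<in> K0 \<Longrightarrow> v \<otimes> k \<otimes> inv v \<in> K0" using K0_conj inV by blast

lemma K0_conjV': "v \<in> V \<Longrightarrow> k \<in> K0 \<Longrightarrow> inv v \<otimes> k \<otimes> v \<in> K0" using K0_conj' inV by blast

lemma rcosets_GV: "rcosets\<^bsub>GV\<^esub> H = {H #> v | v. v \<in> V}"
  by (auto simp: RCOSETS_def r_coset_def)

lemma H_coset_mem: "c \<in> H #> v \<longleftrightarrow> (\<exists>h\<in>H. c = h \<otimes> v)"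
  by (auto simp: r_coset_def)

lemma H_coset_eq_H: "v \<in> carrier M \<Longrightarrow> (H #> v = H) \<longleftrightarrow> v \<in> H"
  using coset_join1[of H v] coset_join2[of v H] Hsub by blast

lemma H_coset_mult_H: "h \<in> H \<Longrightarrow> v \<in> carrier M \<Longrightarrow> H #> (h \<otimes> v) = H #> v"
proof -
  assume h: "h \<in> H" and v: "v \<in> carrier M"
  have hc: "h \<in> carrier M" using h inV by auto
  have "H #> (h \<otimes> v) = (H #> h) #> v"
    using coset_mult_assoc[of H h v] hc v Hsub by (simp add: subgroup.subset)
  also have "H #> h = H" using H_coset_eq_H[OF hc] h by simp
  finally show ?thesis .
qed

lemma H_coset_mult: assumes v: "v \<in> V" and w: "w \<in> V"
  shows "(H #> v) <#> (H #> w) = H #> (v \<otimes> w)"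
proof -
  interpret N: normal H GV by (rule H_normal_GV)
  have "(H #>\<^bsub>GV\<^esub> v) <#>\<^bsub>GV\<^esub> (H #>\<^bsub>GV\<^esub> w) = H #>\<^bsub>GV\<^esub> (v \<otimes>\<^bsub>GV\<^esub> w)"
    using N.rcos_sum v w by simp
  thus ?thesis by (simp add: r_coset_def set_mult_def)
qed

lemma H_coset_some: assumes v: "v \<in> carrier M"
  shows "\<exists>h\<in>H. (SOME c. c \<in> H #> v) = h \<otimes> v"
proof -
  have "v \<in> H #> v" using rcos_self[OF v Hsub] .
  hence "(SOME c. c \<in> H #> v) \<in> H #> v" by (rule someI)
  thus ?thesis by (simp add: H_coset_mem)
qed

section \<open>The semidirect product\<close>

lemma sdp_carrier: "carrier SD = K0 \<times> {H #> v | v. v \<in> V}"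
  by (simp add: sdp_def rcosets_GV)

lemma sdp_carrier_iff: "x \<in> carrier SD \<longleftrightarrow> (\<exists>k v. k \<in> K0 \<and> v \<in> V \<and> x = (k, H #> v))"
  by (auto simp: sdp_carrier)

lemma sdp_elem: "k \<in> K0 \<Longrightarrow> v \<in> V \<Longrightarrow> (k, H #> v) \<in> carrier SD"
  by (auto simp: sdp_carrier)

lemma H_coset_one: "H #> \<one> = H" using H_coset_eq_H[of \<one>] Hsub subgroup.one_closed by auto

lemma sdp_one: "\<one>\<^bsub>SD\<^esub> = (\<one>, H #> \<one>)" by (simp add: sdp_def H_coset_one)

lemma sdp_mult: assumes k: "k \<in> K0" and k': "k' \<in> K0" and v: "v \<in> V" and v': "v' \<in> V"
  shows "(k, H #> v) \<otimes>\<^bsub>SD\<^esub> (k', H #> v') = (k \<otimes> (v \<otimes> k' \<otimes> inv v), H #> (v \<otimes> v'))"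
proof -
  obtain h where h: "h \<in> H" and c: "(SOME c. c \<in> H #> v) = h \<otimes> v" using H_coset_some[OF inV[OF v]] by blast
  have hc: "h \<in> carrier M" using h inV by auto
  have vk: "v \<otimes> k' \<otimes> inv v \<in> K" using K0_K[OF K0_conj[OF inV[OF v] k']] .
  have "(h \<otimes> v) \<otimes> k' \<otimes> inv (h \<otimes> v) = h \<otimes> (v \<otimes> k' \<otimes> inv v) \<otimes> inv h"
    using hc inV[OF v] inK0[OF k'] by (simp add: cancel_simps)
  also have "\<dots> = v \<otimes> k' \<otimes> inv v" using H_central[OF h vk] .
  finally have e: "(h \<otimes> v) \<otimes> k' \<otimes> inv (h \<otimes> v) = v \<otimes> k' \<otimes> inv v" .
  show ?thesis unfolding sdp_def using c e H_coset_mult[OF v v'] by (simp add: Let_def)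
qed

lemma sdp_assoc:
  assumes x: "x \<in> carrier SD" and y: "y \<in> carrier SD" and z: "z \<in> carrier SD"
  shows "x \<otimes>\<^bsub>SD\<^esub> y \<otimes>\<^bsub>SD\<^esub> z = x \<otimes>\<^bsub>SD\<^esub> (y \<otimes>\<^bsub>SD\<^esub> z)"
proof -
  obtain k1 v1 k2 v2 k3 v3 where
    a: "k1 \<in> K0" "v1 \<in> V" "x = (k1, H #> v1)" "k2 \<in> K0" "v2 \<in> V" "y = (k2, H #> v2)"
      "k3 \<in> K0" "v3 \<in> V" "z = (k3, H #> v3)"
    using x y z by (auto simp: sdp_carrier_iff)
  have c: "k1 \<in> carrier M" "k2 \<in> carrier M" "k3 \<in> carrier M" "v1 \<in> carrier M" "v2 \<in> carrier M" "v3 \<in> carrier M"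
    using a inK0 inV by auto
  have m1: "k1 \<otimes> (v1 \<otimes> k2 \<otimes> inv v1) \<in> K0" "v1 \<otimes> v2 \<in> V"
    using a by (simp_all add: K0_mult K0_conj inV V_mult)
  have m2: "k2 \<otimes> (v2 \<otimes> k3 \<otimes> inv v2) \<in> K0" "v2 \<otimes> v3 \<in> V"
    using a by (simp_all add: K0_mult K0_conj inV V_mult)
  have l: "x \<otimes>\<^bsub>SD\<^esub> y \<otimes>\<^bsub>SD\<^esub> z = (k1 \<otimes> (v1 \<otimes> k2 \<otimes> inv v1) \<otimes> ((v1 \<otimes> v2) \<otimes> k3 \<otimes> inv (v1 \<otimes> v2)),
       H #> (v1 \<otimes> v2 \<otimes> v3))"
    by (simp only: a(3,6,9) sdp_mult[OF a(1) a(4) a(2) a(5)] sdp_mult[OF m1(1) a(7) m1(2) a(8)])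
  have r: "x \<otimes>\<^bsub>SD\<^esub> (y \<otimes>\<^bsub>SD\<^esub> z) = (k1 \<otimes> (v1 \<otimes> (k2 \<otimes> (v2 \<otimes> k3 \<otimes> inv v2)) \<otimes> inv v1),
       H #> (v1 \<otimes> (v2 \<otimes> v3)))"
    by (simp only: a(3,6,9) sdp_mult[OF a(4) a(7) a(5) a(8)] sdp_mult[OF a(1) m2(1) a(2) m2(2)])
  show ?thesis unfolding l r using c by (simp add: cancel_simps)
qed

lemma sdp_inv_elem: "k \<in> K0 \<Longrightarrow> v \<in> V \<Longrightarrow> (inv v \<otimes> inv k \<otimes> v, H #> inv v) \<in> carrier SD"
  by (simp add: sdp_elem K0_conjV' K0_inv V_inv)

lemma sdp_l_inv:
  assumes k: "k \<in> K0" and v: "v \<in> V"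
  shows "(inv v \<otimes> inv k \<otimes> v, H #> inv v) \<otimes>\<^bsub>SD\<^esub> (k, H #> v) = \<one>\<^bsub>SD\<^esub>"
proof -
  have c: "k \<in> carrier M" "v \<in> carrier M" using k v inK0 inV by auto
  have m: "inv v \<otimes> inv k \<otimes> v \<in> K0" "inv v \<in> V" using k v by (simp_all add: K0_conjV' K0_inv V_inv)
  have "(inv v \<otimes> inv k \<otimes> v, H #> inv v) \<otimes>\<^bsub>SD\<^esub> (k, H #> v)
     = (inv v \<otimes> inv k \<otimes> v \<otimes> (inv v \<otimes> k \<otimes> inv (inv v)), H #> (inv v \<otimes> v))"
    by (simp only: sdp_mult[OF m(1) k m(2) v])
  also have "\<dots> = \<one>\<^bsub>SD\<^esub>" using c by (simp add: sdp_one cancel_simps)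
  finally show ?thesis .
qed

lemma sdp_group: "group SD"
proof (rule groupI)
  fix x y assume x: "x \<in> carrier SD" and y: "y \<in> carrier SD"
  then obtain k v k' v' where "k \<in> K0" "v \<in> V" "x = (k, H #> v)" "k' \<in> K0" "v' \<in> V" "y = (k', H #> v')"
    by (auto simp: sdp_carrier_iff)
  thus "x \<otimes>\<^bsub>SD\<^esub> y \<in> carrier SD"
    by (simp add: sdp_mult K0_mult K0_conj inV V_mult sdp_elem)
next
  show "\<one>\<^bsub>SD\<^esub> \<in> carrier SD" by (simp add: sdp_one sdp_elem K0_one V_one)
next
  fix x y z assume "x \<in> carrier SD" "y \<in> carrier SD" "z \<in> carrier SD"
  thus "x \<otimes>\<^bsub>SD\<^esub> y \<otimes>\<^bsub>SD\<^esub> z = x \<otimes>\<^bsub>SD\<^esub> (y \<otimes>\<^bsub>SD\<^esub> z)" by (rule sdp_assoc)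
next
  fix x assume "x \<in> carrier SD"
  then obtain k v where a: "k \<in> K0" "v \<in> V" "x = (k, H #> v)" by (auto simp: sdp_carrier_iff)
  show "\<one>\<^bsub>SD\<^esub> \<otimes>\<^bsub>SD\<^esub> x = x"
    using a inK0 inV by (simp add: sdp_one sdp_mult K0_one V_one)
  show "\<exists>y\<in>carrier SD. y \<otimes>\<^bsub>SD\<^esub> x = \<one>\<^bsub>SD\<^esub>" using sdp_inv_elem[OF a(1,2)] sdp_l_inv[OF a(1,2)] a(3) by blast
qed

lemma sdp_inv: assumes k: "k \<in> K0" and v: "v \<in> V"
  shows "inv\<^bsub>SD\<^esub> (k, H #> v) = (inv v \<otimes> inv k \<otimes> v, H #> inv v)"
  using group.inv_equality[OF sdp_group sdp_l_inv[OF k v] sdp_elem[OF k v] sdp_inv_elem[OF k v]] .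

lemma sdp_conj: assumes k0: "k0 \<in> K0" and v: "v \<in> V" and k: "k \<in> K0" and w: "w \<in> V"
  shows "inv\<^bsub>SD\<^esub> (k0, H #> v) \<otimes>\<^bsub>SD\<^esub> (k, H #> w) \<otimes>\<^bsub>SD\<^esub> (k0, H #> v)
     = (inv v \<otimes> (inv k0 \<otimes> k \<otimes> (w \<otimes> k0 \<otimes> inv w)) \<otimes> v, H #> (inv v \<otimes> w \<otimes> v))"
proof -
  have c: "k0 \<in> carrier M" "v \<in> carrier M" "k \<in> carrier M" "w \<in> carrier M"
    using k0 v k w inK0 inV by auto
  have m: "inv v \<otimes> inv k0 \<otimes> v \<in> K0" "inv v \<in> V" using k0 v by (simp_all add: K0_conjV' K0_inv V_inv)
  have m2: "inv v \<otimes> inv k0 \<otimes> v \<otimes> (inv v \<otimes> k \<otimes> inv (inv v)) \<in> K0" "inv v \<otimes> w \<in> V"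
    using k0 v k w m K0_mult[OF m(1) K0_conjV[OF m(2) k]] by (simp_all add: V_mult V_inv)
  have "inv\<^bsub>SD\<^esub> (k0, H #> v) \<otimes>\<^bsub>SD\<^esub> (k, H #> w) \<otimes>\<^bsub>SD\<^esub> (k0, H #> v)
     = (inv v \<otimes> inv k0 \<otimes> v \<otimes> (inv v \<otimes> k \<otimes> inv (inv v)) \<otimes> ((inv v \<otimes> w) \<otimes> k0 \<otimes> inv (inv v \<otimes> w)),
        H #> (inv v \<otimes> w \<otimes> v))"
    by (simp only: sdp_inv[OF k0 v] sdp_mult[OF m(1) k m(2) w] sdp_mult[OF m2(1) k0 m2(2) v])
  also have "\<dots> = (inv v \<otimes> (inv k0 \<otimes> k \<otimes> (w \<otimes> k0 \<otimes> inv w)) \<otimes> v, H #> (inv v \<otimes> w \<otimes> v))"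
    using c by (simp add: cancel_simps)
  finally show ?thesis .
qed

end

section \<open>Transport of class functions along automorphisms\<close>

definition transp :: "('g, 'b) monoid_scheme \<Rightarrow> ('g \<Rightarrow> 'g) \<Rightarrow> ('g \<Rightarrow> complex) \<Rightarrow> ('g \<Rightarrow> complex)" where
  "transp G \<beta> f = (\<lambda>x. if x \<in> carrier G then f (\<beta> x) else 0)"

lemma conjc_eq_transp: "conjc G g f = transp G (\<lambda>x. inv\<^bsub>G\<^esub> g \<otimes>\<^bsub>G\<^esub> x \<otimes>\<^bsub>G\<^esub> g) f"
  by (simp add: conjc_def transp_def)

lemma autc_eq_transp: "autc G E \<beta> e f = transp G (\<beta> (inv\<^bsub>E\<^esub> e)) f"
  by (simp add: autc_def transp_def)

context ext_map_setting
begin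

definition central_char :: "('g \<Rightarrow> complex) \<Rightarrow> 'g \<Rightarrow> complex" where
  "central_char \<chi> z = \<chi> z / \<chi> \<one>"

text \<open>For \<chi> \<in> Irr(K): \<open>nu \<chi>\<close> is the linear character of H = V \<inter> K below \<chi>, and \<open>theta \<chi>\<close>
  is the restriction of \<chi> to K0, placed on the subgroup K0 \<times> {1} of the semidirect product.\<close>

abbreviation nu :: "('g \<Rightarrow> complex) \<Rightarrow> 'g \<Rightarrow> complex" where
  "nu \<chi> \<equiv> restr (central_char \<chi>) H"

abbreviation theta :: "('g \<Rightarrow> complex) \<Rightarrow> 'g \<times> 'g set \<Rightarrow> complex" where
  "theta \<chi> \<equiv> emb0 H (restr \<chi> K0)"

lemma theta_vanish: assumes x: "x \<notin> carrier SD" shows "theta \<chi> x = 0"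
proof -
  obtain k C where xk: "x = (k, C)" by (cases x)
  have "C = H \<Longrightarrow> k \<notin> K0" using x xk sdp_elem[of k \<one>] V_one H_coset_one by auto
  thus ?thesis using xk by (auto simp: emb0_def restr_def)
qed

end

locale ext_map_transport = ext_map_setting +
  fixes \<beta>
  assumes \<beta>_iso: "\<beta> \<in> iso M M" and \<beta>K: "\<beta> ` K = K" and \<beta>K0: "\<beta> ` K0 = K0" and \<beta>V: "\<beta> ` V = V"
begin

abbreviation \<beta>_SD where
  "\<beta>_SD \<equiv> \<lambda>(k, C). (\<beta> k, \<beta> ` C)"

lemma \<beta>_hom: "group_hom M M \<beta>"
  using \<beta>_iso by (simp add: group_hom_def group_hom_axioms_def grp iso_def)

lemma \<beta>_mult: "x \<in> carrier M \<Longrightarrow> y \<in> carrier M \<Longrightarrow> \<beta> (x \<otimes> y) = \<beta> x \<otimes> \<beta> y"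
  using group_hom.hom_mult[OF \<beta>_hom] by simp

lemma \<beta>_closed: "x \<in> carrier M \<Longrightarrow> \<beta> x \<in> carrier M"
  using group_hom.hom_closed[OF \<beta>_hom] by simp

lemma \<beta>_one: "\<beta> \<one> = \<one>"
  using group_hom.hom_one[OF \<beta>_hom] by simp

lemma \<beta>_inv: "x \<in> carrier M \<Longrightarrow> \<beta> (inv x) = inv (\<beta> x)"
  using group_hom.hom_inv[OF \<beta>_hom] by simp

lemma \<beta>_bij: "bij_betw \<beta> (carrier M) (carrier M)"
  using \<beta>_iso by (simp add: iso_def)

lemma \<beta>_surj: "y \<in> carrier M \<Longrightarrow> \<exists>x\<in>carrier M. \<beta> x = y"
  using \<beta>_bij unfolding bij_betw_def by (metis imageE)

lemma \<beta>_inj: "x \<in> carrier M \<Longrightarrow> y \<in> carrier M \<Longrightarrow> \<beta> x = \<beta> y \<Longrightarrow> x = y"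
  by (rule inj_onD[OF bij_betw_imp_inj_on[OF \<beta>_bij]])

lemma \<beta>_mem_iff:
  assumes S: "S \<subseteq> carrier M" and \<beta>S: "\<beta> ` S = S" and x: "x \<in> carrier M"
  shows "\<beta> x \<in> S \<longleftrightarrow> x \<in> S"
proof
  assume "\<beta> x \<in> S"
  then obtain y where "y \<in> S" "\<beta> y = \<beta> x" using \<beta>S by (metis imageE)
  thus "x \<in> S" using \<beta>_inj[OF _ x] S by auto
qed (use \<beta>S in blast)

lemma \<beta>K_iff: "x \<in> carrier M \<Longrightarrow> \<beta> x \<in> K \<longleftrightarrow> x \<in> K" using \<beta>_mem_iff[OF KM \<beta>K] .

lemma \<beta>K0_iff: "x \<in> carrier M \<Longrightarrow> \<beta> x \<in> K0 \<longleftrightarrow> x \<in> K0" using \<beta>_mem_iff[OF K0M \<beta>K0] .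

lemma \<beta>V_iff: "x \<in> carrier M \<Longrightarrow> \<beta> x \<in> V \<longleftrightarrow> x \<in> V" using \<beta>_mem_iff[OF VM \<beta>V] .

lemma \<beta>H_iff: "x \<in> carrier M \<Longrightarrow> \<beta> x \<in> H \<longleftrightarrow> x \<in> H" using \<beta>K_iff \<beta>V_iff by simp

lemma \<beta>H: "\<beta> ` H = H"
proof
  show "\<beta> ` H \<subseteq> H" using \<beta>H_iff inV by auto
  show "H \<subseteq> \<beta> ` H"
  proof
    fix y assume y: "y \<in> H"
    obtain x where "x \<in> carrier M" "\<beta> x = y" using \<beta>_surj[OF inV[of y]] y by auto
    thus "y \<in> \<beta> ` H" using \<beta>H_iff y by auto
  qed
qed

lemma \<beta>Z: assumes z: "z \<in> Z" shows "\<beta> z \<in> Z"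
proof -
  have zc: "z \<in> carrier M" using inZ[OF z] .
  have "\<beta> z \<otimes> k = k \<otimes> \<beta> z" if "k \<in> K" for k
  proof -
    obtain y where y: "y \<in> K" "k = \<beta> y" using \<open>k \<in> K\<close> \<beta>K by (metis imageE)
    thus ?thesis using \<beta>_mult[OF zc inK[OF y(1)]] \<beta>_mult[OF inK[OF y(1)] zc] Z_comm[OF z y(1)] by simp
  qed
  moreover have "\<beta> z \<in> K" using \<beta>K_iff[OF zc] Z_K[OF z] by simp
  ultimately show ?thesis by (simp add: center_def)
qed

lemma \<beta>_coset: assumes w: "w \<in> carrier M" shows "\<beta> ` (H #> w) = H #> \<beta> w"
proof -
  have "\<beta> ` (H #> w) = (\<lambda>h. \<beta> (h \<otimes> w)) ` H" by (auto simp: r_coset_def)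
  also have "\<dots> = (\<lambda>h. \<beta> h \<otimes> \<beta> w) ` H" by (intro image_cong refl) (simp add: \<beta>_mult inV w)
  also have "\<dots> = (\<lambda>h. h \<otimes> \<beta> w) ` (\<beta> ` H)" by (simp add: image_image)
  also have "\<dots> = H #> \<beta> w" unfolding \<beta>H by (auto simp: r_coset_def)
  finally show ?thesis .
qed

lemma central_char_transp: "z \<in> carrier M \<Longrightarrow> central_char (transp M \<beta> \<chi>) z = central_char \<chi> (\<beta> z)"
  by (simp add: central_char_def transp_def \<beta>_one)

lemma nu_transp: "nu (transp M \<beta> \<chi>) = transp GV \<beta> (nu \<chi>)"
proof
  fix x
  show "nu (transp M \<beta> \<chi>) x = transp GV \<beta> (nu \<chi>) x"
    using \<beta>H_iff[of x] inV[of x] central_char_transp[of x \<chi>] by (auto simp: transp_def[of GV] restr_def)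
qed

lemma theta_transp: "theta (transp M \<beta> \<chi>) = transp SD \<beta>_SD (theta \<chi>)"
proof
  fix x
  show "theta (transp M \<beta> \<chi>) x = transp SD \<beta>_SD (theta \<chi>) x"
  proof (cases "x \<in> carrier SD")
    case True
    then obtain k w where kw: "k \<in> K0" "w \<in> V" "x = (k, H #> w)" by (auto simp: sdp_carrier_iff)
    have c: "k \<in> carrier M" "w \<in> carrier M" using kw inK0 inV by auto
    have "H #> \<beta> w = H \<longleftrightarrow> H #> w = H"
      using H_coset_eq_H[OF \<beta>_closed[OF c(2)]] H_coset_eq_H[OF c(2)] \<beta>H_iff[OF c(2)] by simp
    thus ?thesis using True kw \<beta>K0_iff[OF c(1)] c \<beta>_coset[OF c(2)]
      by (simp add: transp_def emb0_def restr_def)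
  qed (simp add: theta_vanish transp_def)
qed

lemma stab_transp:
  assumes \<chi>: "\<And>y. y \<notin> carrier M \<Longrightarrow> \<chi> y = 0" and x: "x \<in> carrier M"
  shows "x \<in> stab M (transp M \<beta> \<chi>) \<longleftrightarrow> \<beta> x \<in> stab M \<chi>"
proof -
  have conj: "conjc M x (transp M \<beta> \<chi>) = transp M \<beta> (conjc M (\<beta> x) \<chi>)"
    using x \<beta>_closed by (auto simp: conjc_def transp_def \<beta>_mult \<beta>_inv)
  have "transp M \<beta> f = transp M \<beta> g \<longleftrightarrow> f = g"
    if "\<And>y. y \<notin> carrier M \<Longrightarrow> f y = 0" "\<And>y. y \<notin> carrier M \<Longrightarrow> g y = 0" for f g
  proof
    assume eq: "transp M \<beta> f = transp M \<beta> g"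
    show "f = g"
    proof
      fix y
      show "f y = g y"
      proof (cases "y \<in> carrier M")
        case True
        then obtain y' where "y' \<in> carrier M" "\<beta> y' = y" using \<beta>_surj by blast
        thus ?thesis using fun_cong[OF eq, of y'] by (simp add: transp_def)
      qed (simp add: that)
    qed
  qed simp
  hence "conjc M x (transp M \<beta> \<chi>) = transp M \<beta> \<chi> \<longleftrightarrow> conjc M (\<beta> x) \<chi> = \<chi>"
    unfolding conj using \<chi> by (simp add: conjc_def)
  thus ?thesis using x \<beta>_closed by (simp add: stab_def)
qed

end

context ext_map_setting
begin

lemma conj_image:
  assumes v: "v \<in> carrier M" and S: "S \<subseteq> carrier M"
    and cl: "\<And>x. x \<in> S \<Longrightarrow> inv v \<otimes> x \<otimes> v \<in> S" "\<And>x. x \<in> S \<Longrightarrow> v \<otimes> x \<otimes> inv v \<in> S"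
  shows "(\<lambda>x. inv v \<otimes> x \<otimes> v) ` S = S"
proof
  show "(\<lambda>x. inv v \<otimes> x \<otimes> v) ` S \<subseteq> S" using cl(1) by blast
  show "S \<subseteq> (\<lambda>x. inv v \<otimes> x \<otimes> v) ` S"
  proof
    fix y assume y: "y \<in> S"
    have "y = inv v \<otimes> (v \<otimes> y \<otimes> inv v) \<otimes> v" using v y S by (auto simp: cancel_simps)
    thus "y \<in> (\<lambda>x. inv v \<otimes> x \<otimes> v) ` S" using cl(2)[OF y] by blast
  qed
qed

lemma conj_transport:
  assumes v: "v \<in> V" shows "ext_map_transport M E \<alpha> K K0 V KK \<Lambda>0 \<Lambda>e (\<lambda>x. inv v \<otimes> x \<otimes> v)"
proof
  have vc: "v \<in> carrier M" using inV[OF v] .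
  have "inj_on (\<lambda>x. inv v \<otimes> x \<otimes> v) (carrier M)"
    by (rule inj_onI) (use vc in \<open>simp add: m_assoc\<close>)
  moreover have "(\<lambda>x. inv v \<otimes> x \<otimes> v) ` carrier M = carrier M" by (rule conj_image) (use vc in auto)
  moreover have "(\<lambda>x. inv v \<otimes> x \<otimes> v) \<in> hom M M"
    by (rule homI) (use vc in \<open>auto simp: cancel_simps\<close>)
  ultimately show "(\<lambda>x. inv v \<otimes> x \<otimes> v) \<in> iso M M" by (simp add: iso_def bij_betw_def)
  show "(\<lambda>x. inv v \<otimes> x \<otimes> v) ` K = K" by (rule conj_image[OF vc KM]) (simp_all add: K_conj K_conj' vc)
  show "(\<lambda>x. inv v \<otimes> x \<otimes> v) ` K0 = K0" by (rule conj_image[OF vc K0M]) (simp_all add: K0_conj K0_conj' vc)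
  show "(\<lambda>x. inv v \<otimes> x \<otimes> v) ` V = V" by (rule conj_image[OF vc VM]) (simp_all add: V_mult V_inv v)
qed

lemma conjc_SD_eq_transp:
  assumes v: "v \<in> V"
  shows "conjc SD (\<one>, H #> v) \<psi> = transp SD (\<lambda>(k, C). (inv v \<otimes> k \<otimes> v, (\<lambda>x. inv v \<otimes> x \<otimes> v) ` C)) \<psi>"
proof
  interpret T: ext_map_transport M E \<alpha> K K0 V KK \<Lambda>0 \<Lambda>e "\<lambda>x. inv v \<otimes> x \<otimes> v" by (rule conj_transport[OF v])
  fix x
  show "conjc SD (\<one>, H #> v) \<psi> x = transp SD (\<lambda>(k, C). (inv v \<otimes> k \<otimes> v, (\<lambda>x. inv v \<otimes> x \<otimes> v) ` C)) \<psi> x"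
  proof (cases "x \<in> carrier SD")
    case True
    then obtain k w where kw: "k \<in> K0" "w \<in> V" "x = (k, H #> w)" by (auto simp: sdp_carrier_iff)
    have "inv\<^bsub>SD\<^esub> (\<one>, H #> v) \<otimes>\<^bsub>SD\<^esub> x \<otimes>\<^bsub>SD\<^esub> (\<one>, H #> v)
        = (inv v \<otimes> k \<otimes> v, H #> (inv v \<otimes> w \<otimes> v))"
      using sdp_conj[OF K0_one v kw(1,2)] kw inK0 inV v by (simp add: m_assoc)
    thus ?thesis using True kw T.\<beta>_coset[OF inV[OF kw(2)]] by (simp add: conjc_def transp_def)
  qed (simp add: conjc_def transp_def)
qed

lemma aut_transport:
  assumes e: "e \<in> carrier E" shows "ext_map_transport M E \<alpha> K K0 V KK \<Lambda>0 \<Lambda>e (\<alpha> (inv\<^bsub>E\<^esub> e))"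
proof -
  have "inv\<^bsub>E\<^esub> e \<in> carrier E" using act e by (simp add: acts_by_auts_def group.inv_closed)
  thus ?thesis using act aK aK0 aV by unfold_locales (simp_all add: acts_by_auts_def)
qed

end

section \<open>The characters of H and K0 below an irreducible character of K\<close>

context ext_map_setting
begin

lemma nu_conjc: "v \<in> V \<Longrightarrow> nu (conjc M v \<chi>) = conjc GV v (nu \<chi>)"
  using ext_map_transport.nu_transp[OF conj_transport] by (simp add: conjc_eq_transp invGV)

lemma theta_conjc: "v \<in> V \<Longrightarrow> theta (conjc M v \<chi>) = conjc SD (\<one>, H #> v) (theta \<chi>)"
  using ext_map_transport.theta_transp[OF conj_transport] by (simp add: conjc_eq_transp[of M v] conjc_SD_eq_transp)

lemma theta_apply: "k \<in> K0 \<Longrightarrow> w \<in> V \<Longrightarrow> theta \<chi> (k, H #> w) = (if w \<in> H then \<chi> k else 0)"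
  using H_coset_eq_H[OF inV] by (simp add: emb0_def restr_def)

end

locale irr_char = ext_map_setting +
  fixes \<chi> and n :: nat and \<rho>
  assumes chi_KK: "\<chi> \<in> KK"
    and rho_irr: "irreducible_rep (M\<lparr>carrier := K\<rparr>) n \<rho>"
    and chi_eq: "\<chi> = (\<lambda>g. if g \<in> K then mat_trace (\<rho> g) else 0)"
begin

lemma rho_rep: "is_rep GK n \<rho>" using rho_irr by (simp add: irreducible_rep_def)

lemma n_pos: "0 < n" using rep_pos[OF rho_rep] .

lemma rho_carrier: "k \<in> K \<Longrightarrow> \<rho> k \<in> carrier_mat n n" using rep_carrier[OF rho_rep] by simp

lemma rho_mult: "k \<in> K \<Longrightarrow> k' \<in> K \<Longrightarrow> \<rho> (k \<otimes> k') = \<rho> k * \<rho> k'" using rep_mult[OF rho_rep] by simp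

lemma rho_one: "\<rho> \<one> = 1\<^sub>m n" using rep_one[OF rho_rep] by simp

lemma chi_val: "k \<in> K \<Longrightarrow> \<chi> k = mat_trace (\<rho> k)" by (simp add: chi_eq)

lemma chi_out: "x \<notin> K \<Longrightarrow> \<chi> x = 0" by (simp add: chi_eq)

lemma chi_outM: "x \<notin> carrier M \<Longrightarrow> \<chi> x = 0" using chi_out KM by auto

lemma chi_one: "\<chi> \<one> = of_nat n" using K_one by (simp add: chi_val rho_one mat_trace_one)

lemma chi_one_nz: "\<chi> \<one> \<noteq> 0" using chi_one n_pos by simp

lemma rho_central: assumes z: "z \<in> Z" shows "\<rho> z = central_char \<chi> z \<cdot>\<^sub>m 1\<^sub>m n"
proof -
  have zK: "z \<in> K" using Z_K[OF z] .
  obtain a where a: "\<rho> z = a \<cdot>\<^sub>m 1\<^sub>m n"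
    using schur_scalar[OF rho_irr rho_carrier[OF zK]] rho_mult[OF zK] rho_mult[OF _ zK] Z_comm[OF z]
    by fastforce
  have "\<chi> z = a * of_nat n" using chi_val[OF zK] a by (simp add: mat_trace_smult[of "1\<^sub>m n" n] mat_trace_one)
  hence "a = central_char \<chi> z" using chi_one n_pos by (simp add: central_char_def)
  thus ?thesis using a by simp
qed

lemma central_char_mult:
  assumes a: "a \<in> Z" and b: "b \<in> Z" shows "central_char \<chi> (a \<otimes> b) = central_char \<chi> a * central_char \<chi> b"
proof -
  have "central_char \<chi> (a \<otimes> b) \<cdot>\<^sub>m 1\<^sub>m n = (central_char \<chi> a * central_char \<chi> b) \<cdot>\<^sub>m 1\<^sub>m n"
    using rho_central[OF Z_mult[OF a b]] rho_central[OF a] rho_central[OF b] rho_mult[OF Z_K[OF a] Z_K[OF b]]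
    by (simp add: smult_mult_smult_mat[of _ n])
  hence "(central_char \<chi> (a \<otimes> b) \<cdot>\<^sub>m 1\<^sub>m n) $$ (0,0) = ((central_char \<chi> a * central_char \<chi> b) \<cdot>\<^sub>m 1\<^sub>m n) $$ (0,0)"
    by simp
  thus ?thesis using n_pos by simp
qed

lemma central_char_one: "central_char \<chi> \<one> = 1" using chi_one_nz by (simp add: central_char_def)

lemma chi_central_mult: assumes z: "z \<in> Z" and k: "k \<in> K" shows "\<chi> (z \<otimes> k) = central_char \<chi> z * \<chi> k"
proof -
  have "\<rho> (z \<otimes> k) = central_char \<chi> z \<cdot>\<^sub>m \<rho> k"
    using rho_mult[OF Z_K[OF z] k] rho_central[OF z] rho_carrier[OF k] by (simp add: smult_one_mat_mult)
  thus ?thesis using chi_val[OF k] chi_val[OF K_mult[OF Z_K[OF z] k]] rho_carrier[OF k]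
    by (simp add: mat_trace_smult[of _ n])
qed

lemma chi_central: "z \<in> Z \<Longrightarrow> \<chi> z = central_char \<chi> z * of_nat n"
  using chi_central_mult[OF _ K_one] inZ chi_one by simp

lemma conjc_K: "k \<in> K \<Longrightarrow> conjc M k \<chi> = \<chi>"
  using Irr_conjc_invariant[OF grp Ksub] chi_KK KKirr by blast

lemma rho_K0_irr: "irreducible_rep GK0 n \<rho>"
  unfolding irreducible_rep_iff
proof (intro conjI allI impI)
  show "is_rep GK0 n \<rho>" using rho_rep K0K unfolding is_rep_def by auto
  fix W assume W: "invariant_subspace GK0 n \<rho> W"
  have "\<rho> g *\<^sub>v w \<in> W" if g: "g \<in> K" and w: "w \<in> W" for g w
  proof -
    obtain z k0 where zk: "z \<in> Z" "k0 \<in> K0" "g = z \<otimes> k0" using K_decomp[OF g] by blast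
    have wc: "w \<in> carrier_vec n" using W w unfolding invariant_subspace_def is_subspace_def by auto
    have "\<rho> g = central_char \<chi> z \<cdot>\<^sub>m \<rho> k0"
      using zk rho_mult[OF Z_K[OF zk(1)] K0_K[OF zk(2)]] rho_central[OF zk(1)] rho_carrier[OF K0_K[OF zk(2)]]
      by (simp add: smult_one_mat_mult)
    hence "\<rho> g *\<^sub>v w = central_char \<chi> z \<cdot>\<^sub>v (\<rho> k0 *\<^sub>v w)"
      using rho_carrier[OF K0_K[OF zk(2)]] wc by (simp add: smult_mat_mult_vec)
    moreover have "\<rho> k0 *\<^sub>v w \<in> W" using W zk(2) w by (auto simp: invariant_subspace_def)
    ultimately show ?thesis using W unfolding invariant_subspace_def is_subspace_def by auto
  qed
  hence "invariant_subspace GK n \<rho> W" using W by (auto simp: invariant_subspace_def)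
  thus "W = {0\<^sub>v n} \<or> W = carrier_vec n" by (rule irreducible_repD[OF rho_irr])
qed

lemma restr_K0_Irr_under: "restr \<chi> K0 \<in> Irr_under M K0 \<chi>"
proof -
  have finK0: "finite K0" using fin K0M finite_subset by auto
  have "restr \<chi> K0 = (\<lambda>g. if g \<in> carrier GK0 then mat_trace (\<rho> g) else 0)"
    by (auto simp: restr_def chi_val K0_K intro!: ext)
  hence "restr \<chi> K0 \<in> Irr GK0" unfolding Irr_def using rho_K0_irr by auto
  moreover have "(\<Sum>h\<in>K0. restr \<chi> K0 h * cnj (restr \<chi> K0 h)) \<noteq> 0"
    using sum_mult_cnj_nonzero[OF finK0 K0_one, of "restr \<chi> K0"] chi_one_nz K0_one by (simp add: restr_def)
  moreover have "card K0 \<noteq> 0" using finK0 K0_one by auto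
  ultimately show ?thesis by (simp add: Irr_under_def restr_def)
qed

lemma nu_Irr_under: "nu \<chi> \<in> Irr_under M H \<chi>"
proof -
  have finH: "finite H" using fin VM finite_subset by auto
  have oneH: "\<one> \<in> H" using V_one K_one by simp
  define r where "r = (\<lambda>x. central_char \<chi> x \<cdot>\<^sub>m (1\<^sub>m 1 :: complex mat))"
  have "is_rep GH 1 r"
    unfolding is_rep_def r_def using central_char_mult H_Z central_char_one
    by (auto simp: smult_mult_smult_mat[of _ 1])
  hence "irreducible_rep GH 1 r" by (rule rep_dim1_irreducible)
  moreover have "nu \<chi> = (\<lambda>g. if g \<in> carrier GH then mat_trace (r g) else 0)"
    by (auto simp: restr_def r_def mat_trace_smult[of _ 1] mat_trace_one intro!: ext)
  ultimately have "nu \<chi> \<in> Irr GH" unfolding Irr_def by blast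
  have "(\<Sum>h\<in>H. restr \<chi> H h * cnj (nu \<chi> h)) = of_nat n * (\<Sum>h\<in>H. central_char \<chi> h * cnj (central_char \<chi> h))"
    by (simp add: restr_def chi_central[OF H_Z] sum_distrib_left ac_simps)
  moreover have "(\<Sum>h\<in>H. central_char \<chi> h * cnj (central_char \<chi> h)) \<noteq> 0"
    using sum_mult_cnj_nonzero[OF finH oneH, of "central_char \<chi>"] central_char_one by simp
  moreover have "card H \<noteq> 0" using finH oneH by auto
  ultimately show ?thesis using \<open>nu \<chi> \<in> Irr GH\<close> n_pos by (simp add: Irr_under_def)
qed

lemma nu_mem: "nu \<chi> \<in> (\<Union>\<chi>\<in>KK. Irr_under M H \<chi>)"
  using nu_Irr_under chi_KK by blast

lemma theta_mem: "theta \<chi> \<in> emb0 H ` (\<Union>\<chi>\<in>KK. Irr_under M K0 \<chi>)"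
  using restr_K0_Irr_under chi_KK by blast

lemma nu_ext: "\<Lambda>0 (nu \<chi>) \<in> Irr (GV\<lparr>carrier := stab GV (nu \<chi>)\<rparr>) \<and> restr (\<Lambda>0 (nu \<chi>)) H = nu \<chi>"
  using L0_ext nu_mem unfolding ext_map_def by blast

lemma theta_ext: "\<Lambda>e (theta \<chi>) \<in> Irr (SD\<lparr>carrier := stab SD (theta \<chi>)\<rparr>) \<and> restr (\<Lambda>e (theta \<chi>)) (K0 \<times> {H}) = theta \<chi>"
  using Le_ext theta_mem unfolding ext_map_def by blast

definition "V_chi = {v \<in> V. conjc M v \<chi> = \<chi>}"

lemma stab_sub: "subgroup (stab M \<chi>) M" by (rule stab_subgroup[OF grp chi_outM])

lemma K_stab: "k \<in> K \<Longrightarrow> k \<in> stab M \<chi>" using conjc_K inK by (simp add: stab_def)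

lemma V_chi_sub: "subgroup V_chi M"
proof -
  have "V_chi = V \<inter> stab M \<chi>" by (auto simp: V_chi_def stab_def inV)
  thus ?thesis using subgroups_Inter_pair[OF Vsub stab_sub] by simp
qed

lemma V_chi_V: "v \<in> V_chi \<Longrightarrow> v \<in> V" by (simp add: V_chi_def)

lemma V_chi_mult: "a \<in> V_chi \<Longrightarrow> b \<in> V_chi \<Longrightarrow> a \<otimes> b \<in> V_chi" using V_chi_sub by (simp add: subgroup.m_closed)

lemma V_chi_one: "\<one> \<in> V_chi" using V_chi_sub by (simp add: subgroup.one_closed)

lemma H_V_chi: "h \<in> H \<Longrightarrow> h \<in> V_chi" using K_stab[of h] by (auto simp: V_chi_def stab_def)

lemma stab_decomp_iff:
  assumes z: "z \<in> Z" and k0: "k0 \<in> K0" and v: "v \<in> V"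
  shows "z \<otimes> k0 \<otimes> v \<in> stab M \<chi> \<longleftrightarrow> v \<in> V_chi"
proof -
  define k where "k = z \<otimes> k0"
  have k: "k \<in> K" using K_mult[OF Z_K[OF z] K0_K[OF k0]] by (simp add: k_def)
  have kc: "k \<in> carrier M" "v \<in> carrier M" using inK[OF k] inV[OF v] by auto
  have k': "inv v \<otimes> k \<otimes> v \<in> K" using K_conj'[OF kc(2) k] .
  have eq: "v \<otimes> (inv v \<otimes> k \<otimes> v) = k \<otimes> v" using kc by (simp add: cancel_simps)
  have "conjc M (k \<otimes> v) \<chi> = conjc M v \<chi>"
    using conjc_conjc[OF grp kc(2) inK[OF k'], of \<chi>] conjc_K[OF k'] unfolding eq by simp
  thus ?thesis using v kc by (simp add: V_chi_def stab_def k_def)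
qed

lemma central_char_V_chi_conj:
  assumes v: "v \<in> V_chi" and z: "z \<in> Z" shows "central_char \<chi> (v \<otimes> z \<otimes> inv v) = central_char \<chi> z"
proof -
  have "conjc M (inv v) \<chi> = \<chi>" using subgroup.m_inv_closed[OF V_chi_sub v] by (simp add: V_chi_def)
  hence "conjc M (inv v) \<chi> z = \<chi> z" by simp
  thus ?thesis using inZ[OF z] inV[OF V_chi_V[OF v]] by (simp add: conjc_def central_char_def)
qed

lemma V_chi_stab_nu: assumes v: "v \<in> V_chi" shows "v \<in> stab GV (nu \<chi>)"
proof -
  have c: "conjc M v \<chi> = \<chi>" using v by (simp add: V_chi_def)
  have "conjc GV v (nu \<chi>) = nu \<chi>" using nu_conjc[OF V_chi_V[OF v], of \<chi>] unfolding c by (rule sym)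
  thus ?thesis using V_chi_V[OF v] by (simp add: stab_def)
qed

lemma K0_stab_theta: assumes k0: "k0 \<in> K0" shows "(k0, H) \<in> stab SD (theta \<chi>)"
proof -
  have "conjc SD (k0, H) (theta \<chi>) = theta \<chi>"
  proof
    fix x show "conjc SD (k0, H) (theta \<chi>) x = theta \<chi> x"
  proof (cases "x \<in> carrier SD")
    case True
    then obtain k w where kw: "k \<in> K0" "w \<in> V" "x = (k, H #> w)" by (auto simp: sdp_carrier_iff)
    have c: "k0 \<in> carrier M" "k \<in> carrier M" "w \<in> carrier M" using k0 kw inK0 inV by auto
    have cj: "inv\<^bsub>SD\<^esub> (k0, H) \<otimes>\<^bsub>SD\<^esub> x \<otimes>\<^bsub>SD\<^esub> (k0, H)
        = (inv k0 \<otimes> k \<otimes> (w \<otimes> k0 \<otimes> inv w), H #> w)"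
      using sdp_conj[OF k0 V_one kw(1,2)] kw c H_coset_one by (simp add: m_assoc)
    have "inv k0 \<otimes> k \<otimes> (w \<otimes> k0 \<otimes> inv w) \<in> K0" using K0_mult K0_inv K0_conjV k0 kw by simp
    moreover have "\<chi> (inv k0 \<otimes> k \<otimes> k0) = \<chi> k"
      using fun_cong[OF conjc_K[OF K0_K[OF k0]], of k] c by (simp add: conjc_def)
    ultimately show ?thesis
      using True kw cj H_central[OF _ K0_K[OF k0], of w] by (simp add: conjc_def theta_apply)
  qed (simp add: conjc_def theta_vanish)
  qed
  thus ?thesis using sdp_elem[OF k0 V_one] H_coset_one by (simp add: stab_def)
qed

lemma V_chi_stab_theta: assumes k0: "k0 \<in> K0" and v: "v \<in> V_chi" shows "(k0, H #> v) \<in> stab SD (theta \<chi>)"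
proof -
  have vV: "v \<in> V" using V_chi_V[OF v] .
  have prod: "(k0, H #> v) = (k0, H #> \<one>) \<otimes>\<^bsub>SD\<^esub> (\<one>, H #> v)"
    using sdp_mult[OF k0 K0_one V_one vV] inK0[OF k0] inV[OF vV] by simp
  have c: "conjc M v \<chi> = \<chi>" using v by (simp add: V_chi_def)
  have "conjc SD (\<one>, H #> v) (theta \<chi>) = theta \<chi>" using theta_conjc[OF vV, of \<chi>] unfolding c by (rule sym)
  hence "(\<one>, H #> v) \<in> stab SD (theta \<chi>)" using sdp_elem[OF K0_one vV] by (simp add: stab_def)
  with K0_stab_theta[OF k0] have "(k0, H) \<otimes>\<^bsub>SD\<^esub> (\<one>, H #> v) \<in> stab SD (theta \<chi>)"
    by (intro subgroup.m_closed[OF stab_subgroup[OF sdp_group theta_vanish]])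
  thus ?thesis using prod H_coset_one by simp
qed

end

section \<open>Extending an irreducible character of K to its stabiliser\<close>

context ext_map_setting
begin

definition decomp :: "'g \<Rightarrow> 'g \<times> 'g \<times> 'g" where
  "decomp x = (SOME (z, k0, v). z \<in> Z \<and> k0 \<in> K0 \<and> v \<in> V \<and> x = z \<otimes> k0 \<otimes> v)"

lemma decomp:
  assumes x: "x \<in> carrier M"
  obtains z k0 v where "decomp x = (z, k0, v)" "z \<in> Z" "k0 \<in> K0" "v \<in> V" "x = z \<otimes> k0 \<otimes> v"
proof -
  obtain z k0 v where "z \<in> Z" "k0 \<in> K0" "v \<in> V" "x = z \<otimes> k0 \<otimes> v" using M_decomp[OF x] by blast
  hence "\<exists>p. (case p of (z, k0, v) \<Rightarrow> z \<in> Z \<and> k0 \<in> K0 \<and> v \<in> V \<and> x = z \<otimes> k0 \<otimes> v)" by blast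
  hence "case decomp x of (z, k0, v) \<Rightarrow> z \<in> Z \<and> k0 \<in> K0 \<and> v \<in> V \<and> x = z \<otimes> k0 \<otimes> v"
    unfolding decomp_def by (rule someI_ex)
  thus ?thesis using that by (cases "decomp x") auto
qed

lemma decomp_ambiguity:
  assumes z: "z \<in> Z" and k0: "k0 \<in> K0" and v: "v \<in> V"
    and z': "z' \<in> Z" and k0': "k0' \<in> K0" and v': "v' \<in> V"
    and eq: "z \<otimes> k0 \<otimes> v = z' \<otimes> k0' \<otimes> v'"
  obtains h where "h \<in> H" "v' = h \<otimes> v" "inv z \<otimes> z' \<otimes> h \<in> K0" "k0 = inv z \<otimes> z' \<otimes> h \<otimes> k0'"
proof -
  have c: "z \<in> carrier M" "k0 \<in> carrier M" "v \<in> carrier M" "z' \<in> carrier M" "k0' \<in> carrier M" "v' \<in> carrier M"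
    using inZ[OF z] inK0[OF k0] inV[OF v] inZ[OF z'] inK0[OF k0'] inV[OF v'] by auto
  define h where "h = v' \<otimes> inv v"
  have v'e: "v' = inv (z' \<otimes> k0') \<otimes> (z \<otimes> k0 \<otimes> v)" using eq c by (simp add: cancel_simps)
  have "h = inv (z' \<otimes> k0') \<otimes> (z \<otimes> k0)" using c by (simp add: h_def v'e cancel_simps)
  hence "h \<in> K" using K_mult K_inv Z_K z z' K0_K k0 k0' by simp
  moreover have "h \<in> V" using V_mult[OF v' V_inv[OF v]] by (simp add: h_def)
  ultimately have hH: "h \<in> H" by simp
  have hc: "h \<in> carrier M" using inV hH by auto
  have v'h: "v' = h \<otimes> v" using c by (simp add: h_def cancel_simps)
  have "z \<otimes> k0 \<otimes> v = z' \<otimes> k0' \<otimes> h \<otimes> v" using eq v'h c hc by (simp add: m_assoc)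
  hence "z \<otimes> k0 = z' \<otimes> k0' \<otimes> h" using c hc by (simp add: r_cancel)
  also have "\<dots> = z' \<otimes> h \<otimes> k0'" using Z_comm[OF H_Z[OF hH] K0_K[OF k0']] c hc by (simp add: m_assoc)
  finally have zk: "z \<otimes> k0 = z' \<otimes> h \<otimes> k0'" .
  have "k0 = inv z \<otimes> (z \<otimes> k0)" using c by (simp add: cancel_simps)
  also have "\<dots> = inv z \<otimes> z' \<otimes> h \<otimes> k0'" using zk c hc by (simp add: m_assoc)
  finally have k0e: "k0 = inv z \<otimes> z' \<otimes> h \<otimes> k0'" .
  hence "inv z \<otimes> z' \<otimes> h = k0 \<otimes> inv k0'" using c hc by (simp add: cancel_simps)
  hence "inv z \<otimes> z' \<otimes> h \<in> K0" using K0_mult[OF k0 K0_inv[OF k0']] by simp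
  thus ?thesis using that hH v'h k0e by blast
qed

lemma decomp_mult:
  assumes c: "z \<in> carrier M" "k0 \<in> carrier M" "v \<in> carrier M" "z' \<in> carrier M" "k0' \<in> carrier M" "v' \<in> carrier M"
    and comm: "(v \<otimes> z' \<otimes> inv v) \<otimes> k0 = k0 \<otimes> (v \<otimes> z' \<otimes> inv v)"
  shows "(z \<otimes> k0 \<otimes> v) \<otimes> (z' \<otimes> k0' \<otimes> v')
       = (z \<otimes> (v \<otimes> z' \<otimes> inv v)) \<otimes> (k0 \<otimes> (v \<otimes> k0' \<otimes> inv v)) \<otimes> (v \<otimes> v')"
proof -
  define w where "w = v \<otimes> z' \<otimes> inv v"
  have wc: "w \<in> carrier M" using c by (simp add: w_def)
  have "(z \<otimes> w) \<otimes> (k0 \<otimes> (v \<otimes> k0' \<otimes> inv v)) \<otimes> (v \<otimes> v')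
      = z \<otimes> ((w \<otimes> k0) \<otimes> ((v \<otimes> k0' \<otimes> inv v) \<otimes> (v \<otimes> v')))"
    using c wc by (simp add: m_assoc)
  also have "\<dots> = z \<otimes> ((k0 \<otimes> w) \<otimes> ((v \<otimes> k0' \<otimes> inv v) \<otimes> (v \<otimes> v')))" using comm by (simp add: w_def)
  also have "\<dots> = (z \<otimes> k0 \<otimes> v) \<otimes> (z' \<otimes> k0' \<otimes> v')" using c by (simp add: w_def cancel_simps)
  finally show ?thesis by (simp add: w_def)
qed

definition ext_char :: "('g \<Rightarrow> complex) \<Rightarrow> 'g \<Rightarrow> complex" where
  "ext_char \<chi> x = (if x \<in> stab M \<chi> then
     (case decomp x of (z, k0, v) \<Rightarrow> central_char \<chi> z * \<Lambda>0 (nu \<chi>) v * \<Lambda>e (theta \<chi>) (k0, H #> v))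
   else 0)"

end

locale irr_char_ext = irr_char +
  fixes d :: nat and r and m :: nat and \<tau>
  assumes r_irr: "irreducible_rep ((M\<lparr>carrier := V\<rparr>)\<lparr>carrier := stab (M\<lparr>carrier := V\<rparr>) (nu \<chi>)\<rparr>) d r"
    and nu'_eq: "\<Lambda>0 (nu \<chi>) = (\<lambda>g. if g \<in> stab (M\<lparr>carrier := V\<rparr>) (nu \<chi>) then mat_trace (r g) else 0)"
    and tau_irr: "irreducible_rep ((sdp M K0 V (V \<inter> K))\<lparr>carrier := stab (sdp M K0 V (V \<inter> K)) (theta \<chi>)\<rparr>) m \<tau>"
    and theta'_eq: "\<Lambda>e (theta \<chi>) = (\<lambda>g. if g \<in> stab (sdp M K0 V (V \<inter> K)) (theta \<chi>) then mat_trace (\<tau> g) else 0)"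
begin

abbreviation "S_nu \<equiv> stab GV (nu \<chi>)"
abbreviation "S_theta \<equiv> stab SD (theta \<chi>)"
abbreviation "nu' \<equiv> \<Lambda>0 (nu \<chi>)"
abbreviation "theta' \<equiv> \<Lambda>e (theta \<chi>)"

lemma S_nu_sub: "subgroup S_nu GV" by (rule stab_subgroup[OF GV_group]) (simp add: restr_def)

lemma r_rep: "is_rep (GV\<lparr>carrier := S_nu\<rparr>) d r" using r_irr by (simp add: irreducible_rep_def)

lemma one_S_nu: "\<one> \<in> S_nu" using subgroup.one_closed[OF S_nu_sub] by simp

lemma r_dim: "d = 1"
proof -
  have "restr nu' H \<one> = nu \<chi> \<one>" using nu_ext by simp
  hence "nu' \<one> = 1" using V_one K_one central_char_one by (simp add: restr_def)
  hence "mat_trace (1\<^sub>m d) = 1" using one_S_nu rep_one[OF r_rep] nu'_eq by simp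
  thus ?thesis by (simp add: mat_trace_one)
qed

lemma nu'_val: "a \<in> S_nu \<Longrightarrow> nu' a = r a $$ (0,0)"
  using rep_carrier[OF r_rep, of a] r_dim nu'_eq by (simp add: mat_trace_def)

lemma nu'_mult: assumes a: "a \<in> S_nu" and b: "b \<in> S_nu" shows "nu' (a \<otimes> b) = nu' a * nu' b"
  using subgroup.m_closed[OF S_nu_sub] a b nu'_val rep_mult[OF r_rep, of a b]
    rep_carrier[OF r_rep, of a] rep_carrier[OF r_rep, of b] r_dim
  by (simp add: scalar_prod_row_col[of _ 1 1 _ 1])

lemma nu'_one: "nu' \<one> = 1" using nu'_val[OF one_S_nu] rep_one[OF r_rep] r_dim by simp

lemma nu'_H: "h \<in> H \<Longrightarrow> nu' h = central_char \<chi> h"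
  using fun_cong[OF conjunct2[OF nu_ext], of h] by (simp add: restr_def)

lemma tau_rep: "is_rep (SD\<lparr>carrier := S_theta\<rparr>) m \<tau>" using tau_irr by (simp add: irreducible_rep_def)

lemma tau_mult: "a \<in> S_theta \<Longrightarrow> b \<in> S_theta \<Longrightarrow> \<tau> (a \<otimes>\<^bsub>SD\<^esub> b) = \<tau> a * \<tau> b" using rep_mult[OF tau_rep] by simp

lemma tau_carrier: "a \<in> S_theta \<Longrightarrow> \<tau> a \<in> carrier_mat m m" using rep_carrier[OF tau_rep] by simp

lemma K0_S_theta: "k0 \<in> K0 \<Longrightarrow> (k0, H) \<in> S_theta" using K0_stab_theta .

lemma theta'_val: "s \<in> S_theta \<Longrightarrow> theta' s = mat_trace (\<tau> s)" using theta'_eq by simp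

lemma theta'_K0: "k \<in> K0 \<Longrightarrow> theta' (k, H) = \<chi> k"
  using fun_cong[OF conjunct2[OF theta_ext], of "(k, H)"] by (simp add: restr_def emb0_def)

lemma tau_K0_rep: "is_rep GK0 m (\<lambda>k. \<tau> (k, H))"
  unfolding is_rep_def
proof (intro conjI ballI)
  show "0 < m" using rep_pos[OF tau_rep] .
  show "\<tau> (\<one>\<^bsub>GK0\<^esub>, H) = 1\<^sub>m m" using rep_one[OF tau_rep] sdp_one H_coset_one by simp
next
  fix g assume "g \<in> carrier GK0"
  thus "\<tau> (g, H) \<in> carrier_mat m m" using tau_carrier K0_S_theta by simp
next
  fix g h assume "g \<in> carrier GK0" "h \<in> carrier GK0"
  thus "\<tau> (g \<otimes>\<^bsub>GK0\<^esub> h, H) = \<tau> (g, H) * \<tau> (h, H)"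
    using tau_mult[OF K0_S_theta K0_S_theta, of g h] sdp_mult[of g h \<one> \<one>] V_one H_coset_one inK0 by simp
qed

lemma tau_K0_irr: "irreducible_rep GK0 m (\<lambda>k. \<tau> (k, H))"
proof (rule irreducible_rep_if_same_traces[OF GK0_group _ rho_K0_irr tau_K0_rep])
  show "finite (carrier GK0)" using fin K0M finite_subset by auto
  fix g assume "g \<in> carrier GK0"
  thus "mat_trace (\<tau> (g, H)) = mat_trace (\<rho> g)"
    using theta'_val[OF K0_S_theta] theta'_K0 chi_val[OF K0_K] by simp
qed

lemma tau_dim: "m = n"
  using theta'_val[OF K0_S_theta[OF K0_one]] theta'_K0[OF K0_one] chi_val[OF K_one]
    rep_one[OF tau_K0_rep] rho_one
  by (simp add: mat_trace_one)

lemma tau_central: assumes c: "c \<in> Z" and cK0: "c \<in> K0" shows "\<tau> (c, H) = central_char \<chi> c \<cdot>\<^sub>m 1\<^sub>m n"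
proof -
  have "\<exists>a. \<tau> (c, H) = a \<cdot>\<^sub>m 1\<^sub>m m"
  proof (rule schur_scalar[OF tau_K0_irr])
    show "\<tau> (c, H) \<in> carrier_mat m m" using tau_carrier[OF K0_S_theta[OF cK0]] .
    fix g assume "g \<in> carrier GK0"
    thus "\<tau> (c, H) * \<tau> (g, H) = \<tau> (g, H) * \<tau> (c, H)"
      using rep_mult[OF tau_K0_rep, of c g] rep_mult[OF tau_K0_rep, of g c] Z_comm[OF c K0_K] cK0 by simp
  qed
  then obtain a where a: "\<tau> (c, H) = a \<cdot>\<^sub>m 1\<^sub>m n" using tau_dim by auto
  have "\<chi> c = a * of_nat n"
    using theta'_val[OF K0_S_theta[OF cK0]] theta'_K0[OF cK0] a by (simp add: mat_trace_smult[of _ n] mat_trace_one)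
  hence "a = central_char \<chi> c" using chi_central[OF c] n_pos by simp
  thus ?thesis using a by simp
qed

definition ext_mat where
  "ext_mat z k0 v = (central_char \<chi> z * nu' v) \<cdot>\<^sub>m \<tau> (k0, H #> v)"

lemma ext_mat_carrier: "k0 \<in> K0 \<Longrightarrow> v \<in> V_chi \<Longrightarrow> ext_mat z k0 v \<in> carrier_mat n n"
  using tau_carrier[OF V_chi_stab_theta] tau_dim by (simp add: ext_mat_def)

lemma ext_mat_trace: "k0 \<in> K0 \<Longrightarrow> v \<in> V_chi \<Longrightarrow> mat_trace (ext_mat z k0 v) = central_char \<chi> z * nu' v * theta' (k0, H #> v)"
  using theta'_val[OF V_chi_stab_theta] tau_carrier[OF V_chi_stab_theta] tau_dim
  by (simp add: ext_mat_def mat_trace_smult[of _ n])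

end

context irr_char_ext
begin

lemma ext_mat_well_defined:
  assumes z: "z \<in> Z" and k0: "k0 \<in> K0" and v: "v \<in> V_chi"
    and z': "z' \<in> Z" and k0': "k0' \<in> K0" and v': "v' \<in> V"
    and eq: "z \<otimes> k0 \<otimes> v = z' \<otimes> k0' \<otimes> v'"
  shows "v' \<in> V_chi" and "ext_mat z k0 v = ext_mat z' k0' v'"
proof -
  obtain h where hH: "h \<in> H" and v'h: "v' = h \<otimes> v"
    and cK0: "inv z \<otimes> z' \<otimes> h \<in> K0" and k0e: "k0 = inv z \<otimes> z' \<otimes> h \<otimes> k0'"
    using decomp_ambiguity[OF z k0 V_chi_V[OF v] z' k0' v' eq] .
  define c where "c = inv z \<otimes> z' \<otimes> h"
  have cZ: "c \<in> Z" using Z_mult Z_inv z z' H_Z[OF hH] by (simp add: c_def)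
  have cc: "z \<in> carrier M" "z' \<in> carrier M" "h \<in> carrier M" "v \<in> carrier M"
    using inZ z z' inV hH V_chi_V[OF v] by auto
  show v'V: "v' \<in> V_chi" using V_chi_mult[OF H_V_chi[OF hH] v] v'h by simp
  have "H #> v' = H #> v" using H_coset_mult_H[OF hH cc(4)] v'h by simp
  hence "(c, H) \<otimes>\<^bsub>SD\<^esub> (k0', H #> v') = (k0, H #> v)"
    using sdp_mult[OF cK0[folded c_def] k0' V_one v'] H_coset_one inV[OF v'] inK0[OF k0'] k0e by (simp add: c_def)
  hence "\<tau> (k0, H #> v) = \<tau> (c, H) * \<tau> (k0', H #> v')"
    using tau_mult[OF K0_S_theta[OF cK0[folded c_def]] V_chi_stab_theta[OF k0' v'V]] by simp
  also have "\<dots> = central_char \<chi> c \<cdot>\<^sub>m \<tau> (k0', H #> v')"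
    using tau_central[OF cZ cK0[folded c_def]] tau_carrier[OF V_chi_stab_theta[OF k0' v'V]] tau_dim
    by (simp add: smult_one_mat_mult)
  finally have tau_eq: "\<tau> (k0, H #> v) = central_char \<chi> c \<cdot>\<^sub>m \<tau> (k0', H #> v')" .
  have nu_eq: "nu' v' = central_char \<chi> h * nu' v"
    using nu'_mult[OF V_chi_stab_nu[OF H_V_chi[OF hH]] V_chi_stab_nu[OF v]] nu'_H[OF hH] v'h by simp
  have "z \<otimes> c = z' \<otimes> h" using cc by (simp add: c_def cancel_simps)
  hence cc_eq: "central_char \<chi> z * central_char \<chi> c = central_char \<chi> z' * central_char \<chi> h"
    using central_char_mult[OF z cZ] central_char_mult[OF z' H_Z[OF hH]] by simp
  have "central_char \<chi> z * nu' v * central_char \<chi> c = central_char \<chi> z' * nu' v'"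
    using cc_eq nu_eq by (simp add: ac_simps)
  thus "ext_mat z k0 v = ext_mat z' k0' v'" by (simp add: ext_mat_def tau_eq smult_smult_mat)
qed

definition ext_rep where
  "ext_rep x = (case decomp x of (z, k0, v) \<Rightarrow> ext_mat z k0 v)"

lemma ext_rep_val: assumes z: "z \<in> Z" and k0: "k0 \<in> K0" and v: "v \<in> V_chi"
  shows "ext_rep (z \<otimes> k0 \<otimes> v) = ext_mat z k0 v"
proof -
  have "z \<otimes> k0 \<otimes> v \<in> carrier M" using inZ[OF z] inK0[OF k0] inV[OF V_chi_V[OF v]] by simp
  then obtain z' k0' v' where d: "decomp (z \<otimes> k0 \<otimes> v) = (z', k0', v')" "z' \<in> Z" "k0' \<in> K0" "v' \<in> V"
    "z \<otimes> k0 \<otimes> v = z' \<otimes> k0' \<otimes> v'" by (rule decomp)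
  thus ?thesis using ext_mat_well_defined(2)[OF z k0 v d(2-5)] by (simp add: ext_rep_def)
qed

lemma stab_elem:
  assumes x: "x \<in> stab M \<chi>"
  obtains z k0 v where "z \<in> Z" "k0 \<in> K0" "v \<in> V_chi" "x = z \<otimes> k0 \<otimes> v"
proof -
  have "x \<in> carrier M" using x by (simp add: stab_def)
  then obtain z k0 v where d: "z \<in> Z" "k0 \<in> K0" "v \<in> V" "x = z \<otimes> k0 \<otimes> v" using M_decomp by blast
  thus ?thesis using that stab_decomp_iff[OF d(1-3)] x by blast
qed

lemma ext_rep_carrier: "x \<in> stab M \<chi> \<Longrightarrow> ext_rep x \<in> carrier_mat n n"
  by (metis stab_elem ext_rep_val ext_mat_carrier)

lemma ext_rep_trace: "x \<in> stab M \<chi> \<Longrightarrow> mat_trace (ext_rep x) = ext_char \<chi> x"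
proof -
  assume x: "x \<in> stab M \<chi>"
  then obtain z k0 v where d: "decomp x = (z, k0, v)" "z \<in> Z" "k0 \<in> K0" "v \<in> V" "x = z \<otimes> k0 \<otimes> v"
    using decomp[of x] by (auto simp: stab_def)
  have "v \<in> V_chi" using stab_decomp_iff[OF d(2-4)] x d(5) by simp
  thus ?thesis using x d ext_mat_trace[OF d(3)] by (simp add: ext_rep_def ext_char_def)
qed

lemma ext_rep_mult:
  assumes x: "x \<in> stab M \<chi>" and y: "y \<in> stab M \<chi>" shows "ext_rep (x \<otimes> y) = ext_rep x * ext_rep y"
proof -
  obtain z k0 v where a: "z \<in> Z" "k0 \<in> K0" "v \<in> V_chi" "x = z \<otimes> k0 \<otimes> v" using stab_elem[OF x] .
  obtain z' k0' v' where b: "z' \<in> Z" "k0' \<in> K0" "v' \<in> V_chi" "y = z' \<otimes> k0' \<otimes> v'" using stab_elem[OF y] .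
  have vV: "v \<in> V" "v' \<in> V" using a b V_chi_V by auto
  have c: "z \<in> carrier M" "k0 \<in> carrier M" "v \<in> carrier M" "z' \<in> carrier M" "k0' \<in> carrier M" "v' \<in> carrier M"
    using a b vV inZ inK0 inV by auto
  define w where "w = v \<otimes> z' \<otimes> inv v"
  define k1 where "k1 = v \<otimes> k0' \<otimes> inv v"
  have wZ: "w \<in> Z" using Z_conj[OF c(3) b(1)] by (simp add: w_def)
  have k1: "k1 \<in> K0" using K0_conjV[OF vV(1) b(2)] by (simp add: k1_def)
  have xy: "x \<otimes> y = (z \<otimes> w) \<otimes> (k0 \<otimes> k1) \<otimes> (v \<otimes> v')"
    using decomp_mult[OF c Z_comm[OF wZ K0_K[OF a(2)], unfolded w_def]] a(4) b(4) by (simp add: w_def k1_def)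
  have "(k0, H #> v) \<otimes>\<^bsub>SD\<^esub> (k0', H #> v') = (k0 \<otimes> k1, H #> (v \<otimes> v'))"
    using sdp_mult[OF a(2) b(2) vV] by (simp add: k1_def)
  hence tau_eq: "\<tau> (k0 \<otimes> k1, H #> (v \<otimes> v')) = \<tau> (k0, H #> v) * \<tau> (k0', H #> v')"
    using tau_mult[OF V_chi_stab_theta[OF a(2,3)] V_chi_stab_theta[OF b(2,3)]] by simp
  have cc_eq: "central_char \<chi> (z \<otimes> w) = central_char \<chi> z * central_char \<chi> z'"
    using central_char_mult[OF a(1) wZ] central_char_V_chi_conj[OF a(3) b(1)] by (simp add: w_def)
  have nu_eq: "nu' (v \<otimes> v') = nu' v * nu' v'" using nu'_mult[OF V_chi_stab_nu[OF a(3)] V_chi_stab_nu[OF b(3)]] .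
  have "ext_mat z k0 v * ext_mat z' k0' v'
      = ((central_char \<chi> z * nu' v) * (central_char \<chi> z' * nu' v')) \<cdot>\<^sub>m (\<tau> (k0, H #> v) * \<tau> (k0', H #> v'))"
    unfolding ext_mat_def using tau_carrier[OF V_chi_stab_theta[OF a(2,3)]] tau_carrier[OF V_chi_stab_theta[OF b(2,3)]]
    by (rule smult_mult_smult_mat)
  also have "\<dots> = ext_mat (z \<otimes> w) (k0 \<otimes> k1) (v \<otimes> v')"
    by (simp add: ext_mat_def tau_eq cc_eq nu_eq algebra_simps)
  finally show ?thesis
    using xy a b ext_rep_val[OF Z_mult[OF a(1) wZ] K0_mult[OF a(2) k1] V_chi_mult[OF a(3) b(3)]]
    by (simp add: ext_rep_val)
qed

lemma ext_rep_K0: "k \<in> K0 \<Longrightarrow> ext_rep k = \<tau> (k, H)"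
  using ext_rep_val[OF Z_one _ V_chi_one, of k] inK0 central_char_one nu'_one H_coset_one
    tau_carrier[OF K0_S_theta, of k]
  by (simp add: ext_mat_def one_smult_mat)

lemma ext_rep_irr: "irreducible_rep (M\<lparr>carrier := stab M \<chi>\<rparr>) n ext_rep"
  unfolding irreducible_rep_iff
proof (intro conjI allI impI)
  show rep: "is_rep (M\<lparr>carrier := stab M \<chi>\<rparr>) n ext_rep"
    unfolding is_rep_def using n_pos ext_rep_carrier ext_rep_mult ext_rep_K0[OF K0_one]
      rep_one[OF tau_K0_rep] tau_dim
    by simp
  fix W assume W: "invariant_subspace (M\<lparr>carrier := stab M \<chi>\<rparr>) n ext_rep W"
  have "\<tau> (g, H) *\<^sub>v w \<in> W" if "g \<in> K0" "w \<in> W" for g w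
    using W K_stab[OF K0_K[OF that(1)]] ext_rep_K0[OF that(1)] that(2) by (auto simp: invariant_subspace_def)
  hence "invariant_subspace GK0 n (\<lambda>k. \<tau> (k, H)) W" using W by (simp add: invariant_subspace_def)
  thus "W = {0\<^sub>v n} \<or> W = carrier_vec n" using irreducible_repD[OF tau_K0_irr[unfolded tau_dim]] by blast
qed

lemma ext_char_Irr: "ext_char \<chi> \<in> Irr (M\<lparr>carrier := stab M \<chi>\<rparr>)"
proof -
  have "ext_char \<chi> = (\<lambda>g. if g \<in> carrier (M\<lparr>carrier := stab M \<chi>\<rparr>) then mat_trace (ext_rep g) else 0)"
    using ext_rep_trace by (auto simp: ext_char_def intro!: ext)
  thus ?thesis using ext_rep_irr unfolding Irr_def by blast
qed

lemma ext_char_val: assumes z: "z \<in> Z" and k0: "k0 \<in> K0" and v: "v \<in> V_chi"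
  shows "ext_char \<chi> (z \<otimes> k0 \<otimes> v) = central_char \<chi> z * nu' v * theta' (k0, H #> v)"
  using ext_rep_trace[of "z \<otimes> k0 \<otimes> v"] stab_decomp_iff[OF z k0 V_chi_V[OF v]] v
    ext_rep_val[OF z k0 v] ext_mat_trace[OF k0 v]
  by simp

lemma ext_char_restr: "restr (ext_char \<chi>) K = \<chi>"
proof
  fix x
  show "restr (ext_char \<chi>) K x = \<chi> x"
  proof (cases "x \<in> K")
    case True
    obtain z k0 where zk: "z \<in> Z" "k0 \<in> K0" "x = z \<otimes> k0" using K_decomp[OF True] by blast
    have "ext_char \<chi> x = central_char \<chi> z * \<chi> k0"
      using ext_char_val[OF zk(1,2) V_chi_one] zk inZ inK0 nu'_one H_coset_one theta'_K0[OF zk(2)] by simp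
    thus ?thesis using True chi_central_mult[OF zk(1) K0_K[OF zk(2)]] zk(3) by (simp add: restr_def)
  qed (simp add: restr_def chi_out)
qed

end

context ext_map_setting
begin

lemma irr_char_ext_exists:
  assumes chi: "\<chi> \<in> KK"
  obtains n \<rho> d r m \<tau> where "irr_char_ext M E \<alpha> K K0 V KK \<Lambda>0 \<Lambda>e \<chi> n \<rho> d r m \<tau>"
proof -
  obtain n \<rho> where irr: "irreducible_rep GK n \<rho>"
    and eq: "\<chi> = (\<lambda>g. if g \<in> carrier GK then mat_trace (\<rho> g) else 0)"
    using KKirr chi unfolding Irr_def by blast
  have ic: "irr_char M E \<alpha> K K0 V KK \<Lambda>0 \<Lambda>e \<chi> n \<rho>"
    by (intro irr_char.intro ext_map_setting_axioms irr_char_axioms.intro chi irr) (use eq in simp)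
  interpret C: irr_char M E \<alpha> K K0 V KK \<Lambda>0 \<Lambda>e \<chi> n \<rho> by (rule ic)
  obtain d r where r: "irreducible_rep (GV\<lparr>carrier := stab GV (nu \<chi>)\<rparr>) d r"
    "\<Lambda>0 (nu \<chi>) = (\<lambda>g. if g \<in> carrier (GV\<lparr>carrier := stab GV (nu \<chi>)\<rparr>) then mat_trace (r g) else 0)"
    using C.nu_ext unfolding Irr_def by blast
  obtain m \<tau> where t: "irreducible_rep (SD\<lparr>carrier := stab SD (theta \<chi>)\<rparr>) m \<tau>"
    "\<Lambda>e (theta \<chi>) = (\<lambda>g. if g \<in> carrier (SD\<lparr>carrier := stab SD (theta \<chi>)\<rparr>) then mat_trace (\<tau> g) else 0)"
    using C.theta_ext unfolding Irr_def by blast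
  have "irr_char_ext M E \<alpha> K K0 V KK \<Lambda>0 \<Lambda>e \<chi> n \<rho> d r m \<tau>"
    by (intro irr_char_ext.intro ic irr_char_ext_axioms.intro r(1) t(1)) (use r(2) t(2) in simp_all)
  thus ?thesis by (rule that)
qed

lemma KK_vanish: assumes "\<chi> \<in> KK" "x \<notin> carrier M" shows "\<chi> x = 0"
proof -
  obtain n \<rho> where "\<chi> = (\<lambda>g. if g \<in> K then mat_trace (\<rho> g) else 0)"
    using assms(1) KKirr unfolding Irr_def by auto
  thus ?thesis using KM assms(2) by auto
qed

lemma KK_ext_char_Irr: assumes "\<chi> \<in> KK" shows "ext_char \<chi> \<in> Irr (M\<lparr>carrier := stab M \<chi>\<rparr>)"
  by (rule irr_char_ext_exists[OF assms]) (erule irr_char_ext.ext_char_Irr)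

lemma KK_ext_char_restr: assumes "\<chi> \<in> KK" shows "restr (ext_char \<chi>) K = \<chi>"
  by (rule irr_char_ext_exists[OF assms]) (erule irr_char_ext.ext_char_restr)

lemma KK_nu_mem: assumes "\<chi> \<in> KK" shows "nu \<chi> \<in> (\<Union>\<chi>\<in>KK. Irr_under M H \<chi>)"
  by (rule irr_char_ext_exists[OF assms]) (erule irr_char.nu_mem[OF irr_char_ext.axioms(1)])

lemma KK_theta_mem: assumes "\<chi> \<in> KK" shows "theta \<chi> \<in> emb0 H ` (\<Union>\<chi>\<in>KK. Irr_under M K0 \<chi>)"
  by (rule irr_char_ext_exists[OF assms]) (erule irr_char.theta_mem[OF irr_char_ext.axioms(1)])

lemma KK_K_stab: assumes "\<chi> \<in> KK" and k: "k \<in> K" shows "k \<in> stab M \<chi>"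
  using Irr_conjc_invariant[OF grp Ksub _ k] KKirr assms inK[OF k] by (auto simp: stab_def)

lemma KK_stab_decomp_iff:
  assumes "\<chi> \<in> KK" "z \<in> Z" "k0 \<in> K0" "v \<in> V"
  shows "z \<otimes> k0 \<otimes> v \<in> stab M \<chi> \<longleftrightarrow> conjc M v \<chi> = \<chi>"
proof -
  obtain n \<rho> d r m \<tau> where "irr_char_ext M E \<alpha> K K0 V KK \<Lambda>0 \<Lambda>e \<chi> n \<rho> d r m \<tau>"
    using irr_char_ext_exists[OF assms(1)] .
  then interpret C: irr_char_ext M E \<alpha> K K0 V KK \<Lambda>0 \<Lambda>e \<chi> n \<rho> d r m \<tau> .
  show ?thesis using C.stab_decomp_iff[OF assms(2-4)] assms(4) by (simp add: C.V_chi_def)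
qed

lemma KK_ext_char_val:
  assumes "\<chi> \<in> KK" "z \<in> Z" "k0 \<in> K0" "v \<in> V" "conjc M v \<chi> = \<chi>"
  shows "ext_char \<chi> (z \<otimes> k0 \<otimes> v) = central_char \<chi> z * \<Lambda>0 (nu \<chi>) v * \<Lambda>e (theta \<chi>) (k0, H #> v)"
proof -
  obtain n \<rho> d r m \<tau> where "irr_char_ext M E \<alpha> K K0 V KK \<Lambda>0 \<Lambda>e \<chi> n \<rho> d r m \<tau>"
    using irr_char_ext_exists[OF assms(1)] .
  then interpret C: irr_char_ext M E \<alpha> K K0 V KK \<Lambda>0 \<Lambda>e \<chi> n \<rho> d r m \<tau> .
  show ?thesis using C.ext_char_val[OF assms(2,3)] assms(4,5) by (simp add: C.V_chi_def)
qed

end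

section \<open>Equivariance of the extension map\<close>

context ext_map_transport
begin

lemma ext_char_transp:
  assumes chi: "\<chi> \<in> KK" and chi': "transp M \<beta> \<chi> \<in> KK"
    and nu_eq: "\<Lambda>0 (transp GV \<beta> (nu \<chi>)) = transp GV \<beta> (\<Lambda>0 (nu \<chi>))"
    and theta_eq: "\<Lambda>e (transp SD \<beta>_SD (theta \<chi>)) = transp SD \<beta>_SD (\<Lambda>e (theta \<chi>))"
  shows "ext_char (transp M \<beta> \<chi>) = transp M \<beta> (ext_char \<chi>)"
proof
  fix x
  define \<chi>' where "\<chi>' = transp M \<beta> \<chi>"
  have stab_iff: "x \<in> stab M \<chi>' \<longleftrightarrow> \<beta> x \<in> stab M \<chi>" if "x \<in> carrier M"
    unfolding \<chi>'_def by (rule stab_transp[OF KK_vanish[OF chi] that])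
  show "ext_char \<chi>' x = transp M \<beta> (ext_char \<chi>) x"
  proof (cases "x \<in> stab M \<chi>'")
    case True
    hence xc: "x \<in> carrier M" by (simp add: stab_def)
    obtain z k0 w where d: "z \<in> Z" "k0 \<in> K0" "w \<in> V" "x = z \<otimes> k0 \<otimes> w" using M_decomp[OF xc] by blast
    have c: "z \<in> carrier M" "k0 \<in> carrier M" "w \<in> carrier M" using d inZ inK0 inV by auto
    have d': "\<beta> z \<in> Z" "\<beta> k0 \<in> K0" "\<beta> w \<in> V" using \<beta>Z[OF d(1)] \<beta>K0_iff[OF c(2)] \<beta>V_iff[OF c(3)] d by auto
    have \<beta>x: "\<beta> x = \<beta> z \<otimes> \<beta> k0 \<otimes> \<beta> w" using d(4) c by (simp add: \<beta>_mult)
    have "ext_char \<chi>' x = central_char \<chi>' z * \<Lambda>0 (nu \<chi>') w * \<Lambda>e (theta \<chi>') (k0, H #> w)"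
      using KK_ext_char_val[OF chi'[folded \<chi>'_def] d(1-3)] KK_stab_decomp_iff[OF chi'[folded \<chi>'_def] d(1-3)] True d(4)
      by simp
    also have "\<dots> = central_char \<chi> (\<beta> z) * \<Lambda>0 (nu \<chi>) (\<beta> w) * \<Lambda>e (theta \<chi>) (\<beta> k0, H #> \<beta> w)"
      using central_char_transp[OF c(1)] nu_transp nu_eq theta_transp theta_eq sdp_elem[OF d(2,3)] d(3)
        \<beta>_coset[OF c(3)]
      by (simp add: \<chi>'_def transp_def)
    also have "\<dots> = ext_char \<chi> (\<beta> x)"
      using KK_ext_char_val[OF chi d'] KK_stab_decomp_iff[OF chi d'] stab_iff[OF xc] True \<beta>x by simp
    finally show ?thesis using xc by (simp add: transp_def)
  next
    case False
    thus ?thesis using stab_iff by (auto simp: ext_char_def transp_def stab_def)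
  qed
qed

end

context ext_map_setting
begin

lemma ext_char_conjc_V:
  assumes chi: "\<chi> \<in> KK" and v: "v \<in> V"
  shows "ext_char (conjc M v \<chi>) = conjc M v (ext_char \<chi>)"
proof -
  interpret T: ext_map_transport M E \<alpha> K K0 V KK \<Lambda>0 \<Lambda>e "\<lambda>x. inv v \<otimes> x \<otimes> v" by (rule conj_transport[OF v])
  have "(\<one>, H #> v) \<in> {\<one>} \<times> rcosets\<^bsub>GV\<^esub> H" using v by (auto simp: rcosets_GV)
  hence "\<Lambda>e (conjc SD (\<one>, H #> v) (theta \<chi>)) = conjc SD (\<one>, H #> v) (\<Lambda>e (theta \<chi>))"
    using Le_conj KK_theta_mem[OF chi] unfolding conj_equivariant_def by blast
  moreover have "\<Lambda>0 (conjc GV v (nu \<chi>)) = conjc GV v (\<Lambda>0 (nu \<chi>))"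
    using L0_conj KK_nu_mem[OF chi] v unfolding conj_equivariant_def by blast
  moreover have "conjc M v \<chi> \<in> KK" using KKconj chi inV[OF v] by blast
  ultimately show ?thesis
    using T.ext_char_transp[OF chi] by (simp add: conjc_eq_transp[of M v] conjc_eq_transp[of GV v] invGV v conjc_SD_eq_transp)
qed

lemma ext_char_conjc:
  assumes chi: "\<chi> \<in> KK" and m: "m \<in> carrier M"
  shows "ext_char (conjc M m \<chi>) = conjc M m (ext_char \<chi>)"
proof -
  obtain k v where kv: "k \<in> K" "v \<in> V" "m = k \<otimes> v" using m M_eq_KV unfolding set_mult_def by blast
  have c: "k \<in> carrier M" "v \<in> carrier M" using kv inK inV by auto
  have chi': "conjc M v \<chi> \<in> KK" using KKconj chi c by simp
  have "conjc M k (conjc M v \<chi>) = conjc M v \<chi>"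
    using Irr_conjc_invariant[OF grp Ksub _ kv(1)] KKirr chi' by blast
  hence "ext_char (conjc M m \<chi>) = conjc M v (ext_char \<chi>)"
    using conjc_conjc[OF grp c] kv ext_char_conjc_V[OF chi kv(2)] by simp
  also have "\<dots> = conjc M k (conjc M v (ext_char \<chi>))"
    using Irr_conjc_invariant[OF grp stab_subgroup[OF grp KK_vanish[OF chi']] KK_ext_char_Irr[OF chi']
      KK_K_stab[OF chi' kv(1)]] ext_char_conjc_V[OF chi kv(2)]
    by simp
  also have "\<dots> = conjc M m (ext_char \<chi>)" using conjc_conjc[OF grp c] kv by simp
  finally show ?thesis .
qed

lemma ext_char_autc:
  assumes chi: "\<chi> \<in> KK" and e: "e \<in> carrier E"
  shows "ext_char (autc M E \<alpha> e \<chi>) = autc M E \<alpha> e (ext_char \<chi>)"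
proof -
  interpret T: ext_map_transport M E \<alpha> K K0 V KK \<Lambda>0 \<Lambda>e "\<alpha> (inv\<^bsub>E\<^esub> e)" by (rule aut_transport[OF e])
  have "\<Lambda>e (autc SD E (sdp_act \<alpha>) e (theta \<chi>)) = autc SD E (sdp_act \<alpha>) e (\<Lambda>e (theta \<chi>))"
    using Le_aut KK_theta_mem[OF chi] e unfolding aut_equivariant_def by blast
  moreover have "\<Lambda>0 (autc GV E \<alpha> e (nu \<chi>)) = autc GV E \<alpha> e (\<Lambda>0 (nu \<chi>))"
    using L0_aut KK_nu_mem[OF chi] e unfolding aut_equivariant_def by blast
  moreover have "autc M E \<alpha> e \<chi> \<in> KK" using KKaut chi e by blast
  moreover have "sdp_act \<alpha> (inv\<^bsub>E\<^esub> e) = (\<lambda>(k, C). (\<alpha> (inv\<^bsub>E\<^esub> e) k, \<alpha> (inv\<^bsub>E\<^esub> e) ` C))"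
    by (simp add: sdp_act_def)
  ultimately show ?thesis using T.ext_char_transp[OF chi] by (simp add: autc_eq_transp)
qed

end

theorem proposition4p1:
  fixes M :: "('g, 'b) monoid_scheme" and E :: "('e, 'c) monoid_scheme"
    and \<alpha> :: "'e \<Rightarrow> 'g \<Rightarrow> 'g"
    and K K0 :: "'g set" and KK :: "('g \<Rightarrow> complex) set"
  assumes "group M" and "finite (carrier M)"
    and "K \<lhd> M" and "K0 \<lhd> M" and "K0 \<subseteq> K"
    and "acts_by_auts E M \<alpha>"
    and "\<forall>e\<in>carrier E. \<alpha> e ` K = K" and "\<forall>e\<in>carrier E. \<alpha> e ` K0 = K0"
    and "KK \<subseteq> Irr (M\<lparr>carrier := K\<rparr>)"
    and "\<forall>m\<in>carrier M. \<forall>\<chi>\<in>KK. conjc M m \<chi> \<in> KK"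
    and "\<forall>e\<in>carrier E. \<forall>\<chi>\<in>KK. autc M E \<alpha> e \<chi> \<in> KK"
    \<comment> \<open>(i)\<close>
    and "K = center M K <#>\<^bsub>M\<^esub> K0"
    \<comment> \<open>(ii)\<close>
    and "\<exists>V. subgroup V M \<and> (\<forall>e\<in>carrier E. \<alpha> e ` V = V) \<and>
           carrier M = K <#>\<^bsub>M\<^esub> V \<and> V \<inter> K \<subseteq> center M K \<and>
           (\<exists>\<Lambda>0. ext_map (M\<lparr>carrier := V\<rparr>) (V \<inter> K) (\<Union>\<chi>\<in>KK. Irr_under M (V \<inter> K) \<chi>) \<Lambda>0 \<and>
                  conj_equivariant (M\<lparr>carrier := V\<rparr>) V (\<Union>\<chi>\<in>KK. Irr_under M (V \<inter> K) \<chi>) \<Lambda>0 \<and>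
                  aut_equivariant (M\<lparr>carrier := V\<rparr>) E \<alpha> (\<Union>\<chi>\<in>KK. Irr_under M (V \<inter> K) \<chi>) \<Lambda>0) \<and>
    \<comment> \<open>(iii)\<close>
           (\<exists>\<Lambda>e. ext_map (sdp M K0 V (V \<inter> K)) (K0 \<times> {V \<inter> K})
                      (emb0 (V \<inter> K) ` (\<Union>\<chi>\<in>KK. Irr_under M K0 \<chi>)) \<Lambda>e \<and>
                  conj_equivariant (sdp M K0 V (V \<inter> K)) ({\<one>\<^bsub>M\<^esub>} \<times> rcosets\<^bsub>M\<lparr>carrier := V\<rparr>\<^esub> (V \<inter> K))
                      (emb0 (V \<inter> K) ` (\<Union>\<chi>\<in>KK. Irr_under M K0 \<chi>)) \<Lambda>e \<and>
                  aut_equivariant (sdp M K0 V (V \<inter> K)) E (sdp_act \<alpha>)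
                      (emb0 (V \<inter> K) ` (\<Union>\<chi>\<in>KK. Irr_under M K0 \<chi>)) \<Lambda>e)"
  shows "\<exists>\<Lambda>. ext_map M K KK \<Lambda> \<and> conj_equivariant M (carrier M) KK \<Lambda> \<and>
              aut_equivariant M E \<alpha> KK \<Lambda>"
proof -
  obtain V \<Lambda>0 \<Lambda>e where V: "subgroup V M" "\<forall>e\<in>carrier E. \<alpha> e ` V = V"
      "carrier M = K <#>\<^bsub>M\<^esub> V" "V \<inter> K \<subseteq> center M K"
    and L0: "ext_map (M\<lparr>carrier := V\<rparr>) (V \<inter> K) (\<Union>\<chi>\<in>KK. Irr_under M (V \<inter> K) \<chi>) \<Lambda>0"
      "conj_equivariant (M\<lparr>carrier := V\<rparr>) V (\<Union>\<chi>\<in>KK. Irr_under M (V \<inter> K) \<chi>) \<Lambda>0"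
      "aut_equivariant (M\<lparr>carrier := V\<rparr>) E \<alpha> (\<Union>\<chi>\<in>KK. Irr_under M (V \<inter> K) \<chi>) \<Lambda>0"
    and Le: "ext_map (sdp M K0 V (V \<inter> K)) (K0 \<times> {V \<inter> K}) (emb0 (V \<inter> K) ` (\<Union>\<chi>\<in>KK. Irr_under M K0 \<chi>)) \<Lambda>e"
      "conj_equivariant (sdp M K0 V (V \<inter> K)) ({\<one>\<^bsub>M\<^esub>} \<times> rcosets\<^bsub>M\<lparr>carrier := V\<rparr>\<^esub> (V \<inter> K))
         (emb0 (V \<inter> K) ` (\<Union>\<chi>\<in>KK. Irr_under M K0 \<chi>)) \<Lambda>e"
      "aut_equivariant (sdp M K0 V (V \<inter> K)) E (sdp_act \<alpha>) (emb0 (V \<inter> K) ` (\<Union>\<chi>\<in>KK. Irr_under M K0 \<chi>)) \<Lambda>e"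
    using assms(13) by blast
  interpret S: ext_map_setting M E \<alpha> K K0 V KK \<Lambda>0 \<Lambda>e
    by (rule ext_map_setting.intro) (use assms V L0 Le in auto)
  have "ext_map M K KK S.ext_char"
    unfolding ext_map_def using S.KK_ext_char_Irr S.KK_ext_char_restr by blast
  moreover have "conj_equivariant M (carrier M) KK S.ext_char"
    unfolding conj_equivariant_def using S.ext_char_conjc by blast
  moreover have "aut_equivariant M E \<alpha> KK S.ext_char"
    unfolding aut_equivariant_def using S.ext_char_autc by blast
  ultimately show ?thesis by blast
qed

end
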